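(* Let $q$ be a prime power, $m\ge1$, $1\le k\le n$, $g_1,\dots,g_n\in\mathbb{F}_{q^m}$ linearly independent over $\mathbb{F}_q$, $\mathbf g=(g_1,\dots,g_n)$, $C$ the Gabidulin code defined below, $\mathbf r\in\mathbb{F}_{q^m}^n$, and $t:=\min\{d_R(\mathbf c,\mathbf r):\mathbf c\in C\}$. Let $B=\{b^{(1)},b^{(2)}\}$ be a minimal basis of the interpolation module $\mathfrak M(\mathbf r)$ with respect to the $(0,k-1)$-weighted term-over-position order with $\mathrm{lpos}(b^{(i)})=i$ ($i=1,2$), write $b^{(i)}=[b^{(i)}_1\ \ b^{(i)}_2]$, and let $\ell_i$ be the $(0,k-1)$-weighted $q$-degree of $b^{(i)}$. Then $\ell_2\le t+k-1$, or equivalently $\mathrm{qdeg}(b^{(2)}_2)\le t$. Furthermore, $\ell_1=\mathrm{qdeg}(b^{(1)}_1)\ge n-t$.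
   Context: Write $[i]:=q^i$. A $q$-linearized polynomial is $f(x)=\sum_{i=0}^{d}a_ix^{[i]}$, $a_i\in\mathbb{F}_{q^m}$; if $a_d\ne0$, $d=\mathrm{qdeg}(f)$ ($\mathrm{qdeg}(0)=-\infty$). $\mathcal{L}_q(x,q^m)$ is the ring of these under addition and composition $\circ$. $\Pi_{\mathbf g}(x)=\prod_{u\in\langle g_1,\dots,g_n\rangle}(x-u)$ ($\mathbb{F}_q$-span), of $q$-degree $n$. $\Lambda_{\mathbf g,\mathbf r}(x)=\sum_{i=1}^n(-1)^{n-i}r_i\det(\mathfrak D_i(\mathbf g,x))/\det(M_n(g_1,\dots,g_n))$ ($M_n(v_1,\dots,v_s)$ the $n\times s$ matrix with $(j,l)$ entry $v_l^{[j-1]}$; $\mathfrak D_i(\mathbf g,x)$ is $M_n(g_1,\dots,g_n,x)$ without column $i$), with $\Lambda_{\mathbf g,\mathbf r}(g_i)=r_i$. $C=\{(m(g_1),\dots,m(g_n)):m\in\mathcal{L}_q(x,q^m),\ \mathrm{qdeg}(m)<k\}$. $d_R(\mathbf a,\mathbf b)$ is the $\mathbb{F}_q$-rank of the $m\times n$ $\mathbb{F}_q$-matrix obtained by expanding the coordinates of $\mathbf a-\mathbf b$ in a fixed $\mathbb{F}_q$-basis of $\mathbb{F}_{q^m}$. $\mathfrak M(\mathbf r)$ is the set of all $\beta\circ[\Pi_{\mathbf g}\ \ 0]+\gamma\circ[-\Lambda_{\mathbf g,\mathbf r}\ \ x]$, $\beta,\gamma\in\mathcal{L}_q(x,q^m)$,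 with $h\circ[f_1\ f_2]=[h\circ f_1\ \ h\circ f_2]$. Monomials: $x^{[i]}e_j$, $j\in\{1,2\}$. $(0,k-1)$-weighted term-over-position order: $w_1=0,w_2=k-1$, $x^{[i_1]}e_{j_1}<x^{[i_2]}e_{j_2}$ iff $i_1+w_{j_1}<i_2+w_{j_2}$ or (equality and $j_1<j_2$). $\mathrm{lm},\mathrm{lt},\mathrm{lpos}$: greatest monomial, its term, its coordinate. Weighted $q$-degree of $[f_1\ f_2]$: $\max\{\mathrm{qdeg} f_1,\mathrm{qdeg} f_2+k-1\}$. Basis: generating set with $\sum a_i\circ f^{(i)}=0\Rightarrow a_i=0$. $f$ reduces modulo a set $F$ of nonzero elements in one step if $h=f-\sum_i(b_ix^{[a_i]})\circ f^{(i)}$, $f^{(i)}\in F$, $b_i\in\mathbb{F}_{q^m}$, $a_i\ge0$, with $\mathrm{lm}(f)=x^{[a_i]}\circ\mathrm{lm}(f^{(i)})$ and $\mathrm{lt}(f)=\sum_i(b_ix^{[a_i]})\circ\mathrm{lt}(f^{(i)})$; a basis $B$ is minimal if no $b\in B$ can be reduced modulo $B\setminus\{b\}$. *)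

theory Defs
  imports "HOL-Computational_Algebra.Polynomial" "HOL-Library.Product_Plus"
          "Jordan_Normal_Form.Determinant"
begin

(* The subfield F_q of the finite field 'a (of order q^m): fixed points of x \<mapsto> x^q *)
definition Fq :: "nat \<Rightarrow> 'a::field set" where
  "Fq q = {x. x ^ q = x}"

definition prime_power :: "nat \<Rightarrow> bool" where
  "prime_power q \<longleftrightarrow> (\<exists>p e. prime p \<and> e \<ge> 1 \<and> q = p ^ e)"

definition fq_indep :: "nat \<Rightarrow> (nat \<Rightarrow> 'a::field) \<Rightarrow> nat set \<Rightarrow> bool" where
  "fq_indep q v I \<longleftrightarrow>
     (\<forall>c. (\<forall>i\<in>I. c i \<in> Fq q) \<and> (\<Sum>i\<in>I. c i * v i) = 0 \<longrightarrow> (\<forall>i\<in>I. c i = 0))"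

definition fq_span :: "nat \<Rightarrow> nat \<Rightarrow> (nat \<Rightarrow> 'a::field) \<Rightarrow> 'a set" where
  "fq_span q n g = {\<Sum>i<n. c i * g i | c. \<forall>i<n. c i \<in> Fq q}"

(* q-linearized polynomials: x^[i] = x^(q^i) is  monom 1 (q^i);  composition is pcompose *)
definition qlin :: "nat \<Rightarrow> 'a::zero poly \<Rightarrow> bool" where
  "qlin q f \<longleftrightarrow> (\<forall>i. coeff f i \<noteq> 0 \<longrightarrow> (\<exists>j. i = q ^ j))"

definition qdeg :: "nat \<Rightarrow> 'a::zero poly \<Rightarrow> nat" where
  "qdeg q f = Max {i. coeff f (q ^ i) \<noteq> 0}"

(* rank distance: F_q-rank of the m x n matrix of F_q-coordinates of a - b,
   i.e. the maximal number of F_q-linearly independent columns *)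
definition dR :: "nat \<Rightarrow> nat \<Rightarrow> (nat \<Rightarrow> 'a::field) \<Rightarrow> (nat \<Rightarrow> 'a) \<Rightarrow> nat" where
  "dR q n a b = Max {card I | I. I \<subseteq> {..<n} \<and> fq_indep q (\<lambda>i. a i - b i) I}"

(* Gabidulin code, codewords as functions on {0..<n} (zero outside) *)
definition gabidulin :: "nat \<Rightarrow> nat \<Rightarrow> nat \<Rightarrow> (nat \<Rightarrow> 'a::field) \<Rightarrow> (nat \<Rightarrow> 'a) set" where
  "gabidulin q n k g = {c. \<exists>f. qlin q f \<and> (f = 0 \<or> qdeg q f < k) \<and>
      (\<forall>i<n. c i = poly f (g i)) \<and> (\<forall>i\<ge>n. c i = 0)}"

definition Pi_g :: "nat \<Rightarrow> nat \<Rightarrow> (nat \<Rightarrow> 'a::field) \<Rightarrow> 'a poly" where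
  "Pi_g q n g = (\<Prod>u\<in>fq_span q n g. [:-u, 1:])"

(* M_n(g_1,...,g_n,x): n x (n+1) matrix, entry (j,l) = v_l^[j] (0-based), last column x *)
definition Mext :: "nat \<Rightarrow> nat \<Rightarrow> (nat \<Rightarrow> 'a::field) \<Rightarrow> nat \<Rightarrow> nat \<Rightarrow> 'a poly" where
  "Mext q n g j l = (if l < n then [: g l ^ (q ^ j) :] else monom 1 (q ^ j))"

(* D_i(g,x): M_n(g,x) without column i (0-based) *)
definition Dmat :: "nat \<Rightarrow> nat \<Rightarrow> (nat \<Rightarrow> 'a::field) \<Rightarrow> nat \<Rightarrow> 'a poly mat" where
  "Dmat q n g i = mat n n (\<lambda>(j, l). Mext q n g j (if l < i then l else Suc l))"

definition Mmat :: "nat \<Rightarrow> nat \<Rightarrow> (nat \<Rightarrow> 'a::field) \<Rightarrow> 'a mat" where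
  "Mmat q n g = mat n n (\<lambda>(j, l). g l ^ (q ^ j))"

(* Lambda_{g,r}; the 1-based sign (-1)^(n-i) becomes (-1)^(n-1-i) for 0-based i *)
definition Lambda :: "nat \<Rightarrow> nat \<Rightarrow> (nat \<Rightarrow> 'a::field) \<Rightarrow> (nat \<Rightarrow> 'a) \<Rightarrow> 'a poly" where
  "Lambda q n g r = smult (inverse (det (Mmat q n g)))
     (\<Sum>i<n. smult ((-1) ^ (n - 1 - i) * r i) (det (Dmat q n g i)))"

(* elements of L_q(x,q^m)^2 are pairs; h \<circ> [f1 f2] = [h\<circ>f1  h\<circ>f2] *)
definition lcomp :: "'a::comm_ring_1 poly \<Rightarrow> 'a poly \<times> 'a poly \<Rightarrow> 'a poly \<times> 'a poly" where
  "lcomp h v = (pcompose h (fst v), pcompose h (snd v))"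

definition interp_module :: "nat \<Rightarrow> nat \<Rightarrow> (nat \<Rightarrow> 'a::field) \<Rightarrow> (nat \<Rightarrow> 'a)
    \<Rightarrow> ('a poly \<times> 'a poly) set" where
  "interp_module q n g r = {lcomp \<beta> (Pi_g q n g, 0) + lcomp \<gamma> (- Lambda q n g r, monom 1 1)
      | \<beta> \<gamma>. qlin q \<beta> \<and> qlin q \<gamma>}"

definition is_basis :: "nat \<Rightarrow> ('a::field poly \<times> 'a poly) set \<Rightarrow> ('a poly \<times> 'a poly) set \<Rightarrow> bool" where
  "is_basis q M B \<longleftrightarrow> finite B \<and> B \<subseteq> M \<and>
     (\<forall>v\<in>M. \<exists>a. (\<forall>f\<in>B. qlin q (a f)) \<and> v = (\<Sum>f\<in>B. lcomp (a f) f)) \<and>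
     (\<forall>a. (\<forall>f\<in>B. qlin q (a f)) \<and> (\<Sum>f\<in>B. lcomp (a f) f) = 0 \<longrightarrow> (\<forall>f\<in>B. a f = 0))"

(* monomials x^[i] e_j are pairs (i,j), j \<in> {1,2}; (0,k-1)-weighted TOP order *)
definition wval :: "nat \<Rightarrow> nat \<times> nat \<Rightarrow> nat" where
  "wval k m = fst m + (if snd m = 1 then 0 else k - 1)"

definition mless :: "nat \<Rightarrow> nat \<times> nat \<Rightarrow> nat \<times> nat \<Rightarrow> bool" where
  "mless k m1 m2 \<longleftrightarrow> wval k m1 < wval k m2 \<or> (wval k m1 = wval k m2 \<and> snd m1 < snd m2)"

definition comp_of :: "nat \<Rightarrow> 'a poly \<times> 'a poly \<Rightarrow> 'a poly" where
  "comp_of j v = (if j = 1 then fst v else snd v)"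

definition supp :: "nat \<Rightarrow> 'a::zero poly \<times> 'a poly \<Rightarrow> (nat \<times> nat) set" where
  "supp q v = {(i, j). j \<in> {1, 2} \<and> coeff (comp_of j v) (q ^ i) \<noteq> 0}"

definition lm :: "nat \<Rightarrow> nat \<Rightarrow> 'a::zero poly \<times> 'a poly \<Rightarrow> nat \<times> nat" where
  "lm q k v = (THE m. m \<in> supp q v \<and> (\<forall>m'\<in>supp q v. m' \<noteq> m \<longrightarrow> mless k m' m))"

definition lpos :: "nat \<Rightarrow> nat \<Rightarrow> 'a::zero poly \<times> 'a poly \<Rightarrow> nat" where
  "lpos q k v = snd (lm q k v)"

definition lt :: "nat \<Rightarrow> nat \<Rightarrow> 'a::zero poly \<times> 'a poly \<Rightarrow> 'a poly \<times> 'a poly" where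
  "lt q k v = (let (i, j) = lm q k v; c = coeff (comp_of j v) (q ^ i) in
     if j = 1 then (monom c (q ^ i), 0) else (0, monom c (q ^ i)))"

(* weighted q-degree max{qdeg f1, qdeg f2 + k - 1} (over nonzero components) *)
definition wdeg :: "nat \<Rightarrow> nat \<Rightarrow> 'a::zero poly \<times> 'a poly \<Rightarrow> nat" where
  "wdeg q k v = Max (wval k ` supp q v)"

(* one-step reducibility of f modulo F: terms (b_i, a_i, f^(i)) *)
definition reducible :: "nat \<Rightarrow> nat \<Rightarrow> ('a::field poly \<times> 'a poly) set \<Rightarrow> 'a poly \<times> 'a poly \<Rightarrow> bool" where
  "reducible q k F f \<longleftrightarrow> f \<noteq> 0 \<and> (\<exists>ts :: ('a \<times> nat \<times> ('a poly \<times> 'a poly)) list.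
     (\<forall>(b, a, g) \<in> set ts. g \<in> F \<and> g \<noteq> 0 \<and> lm q k f = (fst (lm q k g) + a, snd (lm q k g))) \<and>
     lt q k f = sum_list (map (\<lambda>(b, a, g). lcomp (monom b (q ^ a)) (lt q k g)) ts))"

definition minimal_basis :: "nat \<Rightarrow> nat \<Rightarrow> ('a::field poly \<times> 'a poly) set \<Rightarrow> ('a poly \<times> 'a poly) set \<Rightarrow> bool" where
  "minimal_basis q k M B \<longleftrightarrow> is_basis q M B \<and> (\<forall>b\<in>B. \<not> reducible q k (B - {b}) b)"

end

theory Submission
  imports Defs
begin

text \<open>
  Let \<open>c = f(g)\<close> be a closest codeword, and let \<open>W\<close> be the \<open>F\<^sub>q\<close>-span of the error
  coordinates \<open>c\<^sub>i - r\<^sub>i\<close>, of dimension \<open>t\<close>. For the subspace polynomial \<open>E\<close> of \<open>W\<close>, the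
  \<open>q\<close>-linearized polynomial \<open>E \<circ> (\<Lambda> - f)\<close> vanishes on \<open>V = \<langle>g\<^sub>1, \<dots>, g\<^sub>n\<rangle>\<close>, so it is a left
  multiple \<open>\<beta> \<circ> \<Pi>\<close>. Hence \<open>\<beta> \<circ> [\<Pi> 0] + E \<circ> [-\<Lambda> x] = [-E \<circ> f  E]\<close> lies in \<open>M(r)\<close> and has
  leading monomial \<open>x\<^sup>[\<^sup>t\<^sup>] e\<^sub>2\<close>. As \<open>lpos b\<^sup>(\<^sup>i\<^sup>) = i\<close>, the leading terms of
  \<open>a\<^sub>1 \<circ> b\<^sup>(\<^sup>1\<^sup>)\<close> and \<open>a\<^sub>2 \<circ> b\<^sup>(\<^sup>2\<^sup>)\<close> never cancel, which forces \<open>qdeg b\<^sup>(\<^sup>2\<^sup>)\<^sub>2 \<le> t\<close>.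

  Conversely write \<open>b\<^sup>(\<^sup>1\<^sup>) = [\<beta> \<circ> \<Pi> - \<gamma> \<circ> \<Lambda>  \<gamma>]\<close>. The weighted order makes \<open>\<gamma> \<circ> f\<close> small, so
  \<open>h = b\<^sup>(\<^sup>1\<^sup>)\<^sub>1 + \<gamma> \<circ> f\<close> has \<open>q\<close>-degree \<open>\<ell>\<^sub>1\<close>; on \<open>V\<close> it equals \<open>\<gamma> \<circ> (f - \<Lambda>)\<close> and thus
  takes at most \<open>|W| = q\<^sup>t\<close> values. Kernel and image of \<open>h\<close> on \<open>V\<close> give \<open>q\<^sup>n \<le> q\<^sup>t q^\<ell>\<^sub>1\<close>.
\<close>

lemma card_le_card_image_mult_card_zeros:
  fixes h :: "'a::ab_group_add \<Rightarrow> 'b::ab_group_add"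
  assumes fin: "finite V" and diff_closed: "\<And>x y. x \<in> V \<Longrightarrow> y \<in> V \<Longrightarrow> x - y \<in> V"
    and hom: "\<And>x y. x \<in> V \<Longrightarrow> y \<in> V \<Longrightarrow> h (x - y) = h x - h y"
  shows "card V \<le> card (h ` V) * card {v\<in>V. h v = 0}"
proof -
  define pick where "pick y = (SOME v. v \<in> V \<and> h v = y)" for y
  have pick: "pick (h v) \<in> V \<and> h (pick (h v)) = h v" if "v \<in> V" for v
    unfolding pick_def by (rule someI[of _ v]) (use that in auto)
  define split where "split v = (h v, v - pick (h v))" for v
  have "card V = card (split ` V)"
    by (rule card_image[symmetric]) (auto simp: inj_on_def split_def)
  also have "\<dots> \<le> card (h ` V \<times> {v\<in>V. h v = 0})"
    using pick diff_closed hom fin by (intro card_mono) (auto simp: split_def)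
  finally show ?thesis by (simp add: card_cartesian_product)
qed

lemma smult_sum_right: "smult c (\<Sum>i\<in>A. f i) = (\<Sum>i\<in>A. smult c (f i :: 'a::comm_semiring_0 poly))"
  by (rule poly_eqI) (simp add: coeff_sum sum_distrib_left)

lemma pcompose_power: "pcompose (p ^ n) (g :: 'a::comm_ring_1 poly) = (pcompose p g) ^ n"
  by (induction n) (simp_all add: pcompose_mult pcompose_1)

lemma pcompose_monom: "pcompose (monom c n) (g :: 'a::comm_ring_1 poly) = smult c (g ^ n)"
  by (simp add: monom_altdef pcompose_smult pcompose_power pcompose_pCons)

lemma card_le_degree_if_roots:
  assumes "p \<noteq> 0" "\<And>x. x \<in> S \<Longrightarrow> poly p x = (0 :: 'a::idom)"
  shows "card S \<le> degree p"
proof -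
  have "card S \<le> card {x. poly p x = 0}"
    using assms by (intro card_mono poly_roots_finite) auto
  thus ?thesis using card_poly_roots_bound[OF assms(1)] by linarith
qed

lemma finite_field_power_card_minus_1:
  fixes x :: "'a::{field,finite}"
  assumes "x \<noteq> 0"
  shows "x ^ (card (UNIV :: 'a set) - 1) = 1"
proof -
  let ?U = "UNIV - {0 :: 'a}"
  have "bij_betw ((*) x) ?U ?U"
    by (rule bij_betwI[of _ _ _ "\<lambda>y. y / x"]) (use assms in auto)
  hence "\<Prod>?U = (\<Prod>y\<in>?U. x * y)"
    using prod.reindex_bij_betw[of "(*) x" ?U ?U "\<lambda>y. y"] by simp
  also have "\<dots> = x ^ card ?U * \<Prod>?U"
    by (simp add: prod.distrib)
  finally have "x ^ card ?U = 1"
    by simp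
  thus ?thesis by simp
qed

section \<open>Finite fields of order \<open>q\<^sup>m\<close>\<close>

locale fq_ext =
  fixes q m :: nat and ty :: "'a::{field,finite} itself"
  assumes m_pos: "m \<ge> 1" and q_CHAR_power: "\<exists>e\<ge>1. q = CHAR('a) ^ e"
    and card_UNIV: "card (UNIV :: 'a set) = q ^ m"
begin

lemma prime_CHAR: "prime CHAR('a)"
  using prime_CHAR_semidom[where ?'a='a] finite_imp_CHAR_pos[where ?'a='a] by auto

lemma q_ge_2: "q \<ge> 2"
proof -
  obtain e where e: "e \<ge> 1" "q = CHAR('a) ^ e" using q_CHAR_power by auto
  have "CHAR('a) \<ge> 2" using prime_CHAR prime_ge_2_nat by blast
  hence "CHAR('a) ^ 1 \<le> CHAR('a) ^ e" using e(1) by (intro power_increasing) auto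
  thus ?thesis using e \<open>CHAR('a) \<ge> 2\<close> by simp
qed

lemma q_power_inject [simp]: "q ^ i = q ^ j \<longleftrightarrow> i = j"
  and q_power_less_iff [simp]: "q ^ i < q ^ j \<longleftrightarrow> i < j"
  and q_power_le_iff [simp]: "q ^ i \<le> q ^ j \<longleftrightarrow> i \<le> j"
  using q_ge_2 by simp_all

lemma less_q_power: "i < q ^ i"
  using q_ge_2 less_exp[of i] power_mono[of 2 q i] by linarith

lemma frobenius_add:
  fixes x y :: "'b::comm_ring_1"
  assumes "CHAR('b) = CHAR('a)"
  shows "(x + y) ^ (q ^ s) = x ^ (q ^ s) + y ^ (q ^ s)"
proof -
  obtain e where "q = CHAR('a) ^ e" using q_CHAR_power by auto
  hence "q ^ s = CHAR('b) ^ (e * s)" by (simp add: assms power_mult)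
  moreover have "prime CHAR('b)" using prime_CHAR assms by simp
  ultimately show ?thesis by (intro freshmans_dream')
qed

lemma frobenius_diff:
  fixes x y :: "'b::comm_ring_1"
  assumes "CHAR('b) = CHAR('a)"
  shows "(x - y) ^ (q ^ s) = x ^ (q ^ s) - y ^ (q ^ s)"
  using frobenius_add[OF assms, of "x - y" y s] by (simp add: algebra_simps)

lemma frobenius_uminus:
  fixes x :: "'b::comm_ring_1"
  assumes "CHAR('b) = CHAR('a)"
  shows "(- x) ^ (q ^ s) = - (x ^ (q ^ s))"
  using frobenius_diff[OF assms, of 0 x s] q_ge_2 by (simp add: power_0_left)

lemma frobenius_sum:
  fixes f :: "'c \<Rightarrow> 'b::comm_ring_1"
  assumes "CHAR('b) = CHAR('a)"
  shows "(\<Sum>i\<in>A. f i) ^ (q ^ s) = (\<Sum>i\<in>A. f i ^ (q ^ s))"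
  by (induction A rule: infinite_finite_induct)
     (use q_ge_2 in \<open>simp_all add: frobenius_add[OF assms] power_0_left\<close>)

lemma power_q_power_m [simp]: "(x :: 'a) ^ (q ^ m) = x"
proof (cases "x = 0")
  case False
  have "x ^ (q ^ m) = x * x ^ (q ^ m - 1)"
    using q_ge_2 by (simp flip: power_Suc)
  thus ?thesis
    using finite_field_power_card_minus_1[OF False] card_UNIV by simp
qed (use q_ge_2 in simp)

lemma Fq_power: "(c::'a) \<in> Fq q \<Longrightarrow> c ^ (q ^ s) = c"
proof (induction s)
  case (Suc s)
  have "c ^ (q ^ Suc s) = (c ^ q) ^ (q ^ s)" by (simp add: power_mult mult.commute)
  thus ?case using Suc by (simp add: Fq_def)
qed simp

lemma Fq_0 [simp]: "(0::'a) \<in> Fq q"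
  and Fq_1 [simp]: "(1::'a) \<in> Fq q"
  using q_ge_2 by (simp_all add: Fq_def)

lemma Fq_add: "(a::'a) \<in> Fq q \<Longrightarrow> b \<in> Fq q \<Longrightarrow> a + b \<in> Fq q"
  and Fq_diff: "(a::'a) \<in> Fq q \<Longrightarrow> b \<in> Fq q \<Longrightarrow> a - b \<in> Fq q"
  and Fq_uminus: "(a::'a) \<in> Fq q \<Longrightarrow> - a \<in> Fq q"
  and Fq_mult: "(a::'a) \<in> Fq q \<Longrightarrow> b \<in> Fq q \<Longrightarrow> a * b \<in> Fq q"
  and Fq_inverse: "(a::'a) \<in> Fq q \<Longrightarrow> inverse a \<in> Fq q"
  using frobenius_add[of a b 1] frobenius_diff[of a b 1] frobenius_uminus[of a 1]
  by (simp_all add: Fq_def power_mult_distrib power_inverse)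

lemma card_Fq_le: "card (Fq q :: 'a set) \<le> q"
proof -
  define P :: "'a poly" where "P = monom 1 q - monom 1 1"
  have "coeff P q = 1" using q_ge_2 by (simp add: P_def coeff_monom)
  hence "P \<noteq> 0" by auto
  hence "card (Fq q :: 'a set) \<le> degree P"
    by (rule card_le_degree_if_roots) (auto simp: P_def Fq_def poly_monom)
  also have "degree P \<le> q" unfolding P_def using q_ge_2
    by (intro degree_diff_le) (auto simp: degree_monom_eq)
  finally show ?thesis .
qed

text \<open>The values of \<open>x\<^sup>q - x\<close> are roots of the trace polynomial \<open>\<Sum>j<m. x^[j]\<close>.\<close>
lemma card_range_power_q_minus_id: "card (range (\<lambda>x::'a. x ^ q - x)) \<le> q ^ (m - 1)"
proof -
  define trace :: "'a poly" where "trace = (\<Sum>j<m. monom 1 (q ^ j))"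
  have "coeff trace (q ^ (m - 1)) = (\<Sum>j<m. if j = m - 1 then 1 else 0)"
    unfolding trace_def coeff_sum coeff_monom by (intro sum.cong) auto
  also have "\<dots> = 1" using m_pos by simp
  finally have "trace \<noteq> 0" by auto
  moreover have "poly trace (x ^ q - x) = 0" for x
  proof -
    have "poly trace (x ^ q - x) = (\<Sum>j<m. x ^ (q ^ Suc j) - x ^ (q ^ j))"
      by (simp add: trace_def poly_sum poly_monom frobenius_diff power_mult[symmetric] mult.commute)
    also have "\<dots> = x ^ (q ^ m) - x ^ (q ^ 0)" by (rule sum_lessThan_telescope)
    finally show ?thesis by simp
  qed
  ultimately have "card (range (\<lambda>x::'a. x ^ q - x)) \<le> degree trace"
    by (intro card_le_degree_if_roots) auto
  also have "degree trace \<le> q ^ (m - 1)"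
    unfolding trace_def by (intro degree_sum_le) (auto simp: degree_monom_eq)
  finally show ?thesis .
qed

text \<open>The \<open>F\<^sub>q\<close>-linear map \<open>x \<mapsto> x\<^sup>q - x\<close> has kernel \<open>F\<^sub>q\<close>.\<close>
lemma card_Fq: "card (Fq q :: 'a set) = q"
proof (rule antisym[OF card_Fq_le])
  let ?h = "\<lambda>x::'a. x ^ q - x"
  have "q ^ (m - 1) * q = card (UNIV :: 'a set)"
    using m_pos by (cases m) (simp_all add: card_UNIV)
  also have "\<dots> \<le> card (range ?h) * card {x\<in>UNIV. ?h x = 0}"
    using frobenius_diff[of _ _ 1]
    by (intro card_le_card_image_mult_card_zeros) (auto simp: algebra_simps)
  also have "{x\<in>UNIV. ?h x = 0} = Fq q" by (auto simp: Fq_def)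
  also have "card (range ?h) * card (Fq q :: 'a set) \<le> q ^ (m - 1) * card (Fq q :: 'a set)"
    using card_range_power_q_minus_id by (rule mult_le_mono1)
  finally show "q \<le> card (Fq q :: 'a set)"
    using q_ge_2 by (meson mult_le_cancel1 zero_less_power nat_less_le zero_less_numeral order.strict_trans2)
qed
end


lemma fq_ext_of_prime_power:
  assumes "prime_power q" "m \<ge> 1" "card (UNIV :: 'a::{field,finite} set) = q ^ m"
  shows "fq_ext TYPE('a) q m"
proof -
  obtain p e where pe: "prime p" "e \<ge> 1" "q = p ^ e" using assms(1) by (auto simp: prime_power_def)
  have "(\<Sum>y\<in>(UNIV::'a set). y + 1) = (\<Sum>y\<in>UNIV. y)"
    by (rule sum.reindex_bij_witness[of _ "\<lambda>y. y - 1" "\<lambda>y. y + 1"]) auto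
  hence "of_nat (card (UNIV :: 'a set)) = (0::'a)" by (simp add: sum.distrib)
  hence "CHAR('a) dvd card (UNIV :: 'a set)" by (simp add: of_nat_eq_0_iff_char_dvd)
  hence "CHAR('a) dvd p ^ (e * m)" by (simp add: assms(3) pe(3) power_mult)
  moreover have "prime CHAR('a)"
    using prime_CHAR_semidom[where ?'a='a] finite_imp_CHAR_pos[where ?'a='a] by auto
  ultimately have "CHAR('a) = p" using prime_dvd_power primes_dvd_imp_eq pe(1) by blast
  thus ?thesis using pe assms(2,3) by unfold_locales auto
qed

section \<open>\<open>q\<close>-linearized polynomials\<close>

context fq_ext
begin

lemma qlin_iff: "qlin q (f :: 'a poly) \<longleftrightarrow> (\<forall>i. (\<nexists>j. i = q ^ j) \<longrightarrow> coeff f i = 0)"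
  unfolding qlin_def by blast

lemma qlin_0 [simp]: "qlin q (0 :: 'a poly)"
  and qlin_monom [simp]: "qlin q (monom (c::'a) (q ^ s))"
  by (auto simp: qlin_def)

lemma qlin_X: "qlin q (monom (1::'a) 1)"
  using qlin_monom[of 1 0] by simp

lemma qlin_add: "qlin q f \<Longrightarrow> qlin q g \<Longrightarrow> qlin q (f + g :: 'a poly)"
  and qlin_diff: "qlin q f \<Longrightarrow> qlin q g \<Longrightarrow> qlin q (f - g :: 'a poly)"
  and qlin_smult: "qlin q f \<Longrightarrow> qlin q (smult c f :: 'a poly)"
  by (auto simp: qlin_iff)

lemma qlin_sum: "(\<And>i. i \<in> A \<Longrightarrow> qlin q (f i)) \<Longrightarrow> qlin q (\<Sum>i\<in>A. f i :: 'a poly)"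
  by (induction A rule: infinite_finite_induct) (auto intro: qlin_add)

lemma coeff_0_qlin: "qlin q (f::'a poly) \<Longrightarrow> coeff f 0 = 0"
  using q_ge_2 by (auto simp: qlin_def)

lemma poly_0_qlin: "qlin q (f::'a poly) \<Longrightarrow> poly f 0 = 0"
  by (simp add: poly_0_coeff_0 coeff_0_qlin)

lemma pcompose_0_qlin: "qlin q (f::'a poly) \<Longrightarrow> pcompose f 0 = 0"
  by (simp add: pcompose_0' coeff_0_qlin)

text \<open>The theory context rewrites \<open>1::nat\<close> to \<open>Suc 0\<close>; uses of this lemma and of
  \<open>lcomp_X\<close> below therefore go through their \<open>[simplified]\<close> forms.\<close>
lemma pcompose_X: "pcompose (f::'a poly) (monom 1 1) = f"
  by (simp add: monom_Suc monom_0)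

lemma ex_q_power_gt_degree: "\<exists>N. degree (f::'a poly) < q ^ N \<and> degree (g::'a poly) < q ^ N \<and> u < N"
proof -
  let ?N = "degree f + degree g + u + 1"
  have "?N < q ^ ?N" by (rule less_q_power)
  thus ?thesis by (intro exI[of _ ?N] conjI) linarith+
qed

lemma qlin_eq_sum_monom:
  fixes f :: "'a poly"
  assumes "qlin q f" "degree f < q ^ N"
  shows "f = (\<Sum>s<N. monom (coeff f (q ^ s)) (q ^ s))"
proof (rule poly_eqI)
  fix j
  have "coeff (\<Sum>s<N. monom (coeff f (q ^ s)) (q ^ s)) j
      = (\<Sum>s<N. if q ^ s = j then coeff f (q ^ s) else 0)"
    by (simp add: coeff_sum)
  also have "\<dots> = coeff f j"
  proof (cases "\<exists>s. j = q ^ s")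
    case True
    then obtain s0 where j: "j = q ^ s0" by auto
    have "(\<Sum>s<N. if q ^ s = j then coeff f (q ^ s) else 0) = (\<Sum>s<N. if s = s0 then coeff f j else 0)"
      by (intro sum.cong) (auto simp: j)
    also have "\<dots> = coeff f j"
    proof (cases "s0 < N")
      case False
      hence "degree f < j" using assms(2) j order.strict_trans2[of _ "q ^ N" "q ^ s0"] by simp
      thus ?thesis using False by (simp add: coeff_eq_0)
    qed simp
    finally show ?thesis .
  next
    case False
    thus ?thesis using assms(1) by (subst sum.neutral) (auto simp: qlin_def)
  qed
  finally show "coeff f j = coeff (\<Sum>s<N. monom (coeff f (q ^ s)) (q ^ s)) j" by simp
qed

lemma power_q_power_qlin:
  fixes f :: "'a poly"
  assumes "qlin q f" "degree f < q ^ N"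
  shows "f ^ (q ^ s) = (\<Sum>i<N. monom (coeff f (q ^ i) ^ (q ^ s)) (q ^ (i + s)))"
proof -
  have "f ^ (q ^ s) = (\<Sum>i<N. monom (coeff f (q ^ i)) (q ^ i)) ^ (q ^ s)"
    using qlin_eq_sum_monom[OF assms] by simp
  also have "\<dots> = (\<Sum>i<N. monom (coeff f (q ^ i) ^ (q ^ s)) (q ^ (i + s)))"
    by (simp add: frobenius_sum monom_power power_add)
  finally show ?thesis .
qed

lemma pcompose_qlin_eq_sum:
  fixes a b :: "'a poly"
  assumes "qlin q a" "qlin q b" "degree a < q ^ N" "degree b < q ^ N"
  shows "pcompose a b =
    (\<Sum>s<N. \<Sum>i<N. monom (coeff a (q ^ s) * coeff b (q ^ i) ^ (q ^ s)) (q ^ (i + s)))"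
  by (subst qlin_eq_sum_monom[OF assms(1,3)])
     (simp add: pcompose_sum pcompose_monom power_q_power_qlin[OF assms(2,4)]
       smult_sum_right smult_monom)

lemma qlin_pcompose: "qlin q a \<Longrightarrow> qlin q b \<Longrightarrow> qlin q (pcompose a b :: 'a poly)"
  using ex_q_power_gt_degree[of a b 0] by (auto simp: pcompose_qlin_eq_sum intro!: qlin_sum)

text \<open>Composition is the product of the skew polynomial ring: \<open>x^[s] \<circ> c x^[i] = c^(q^s) x^[i+s]\<close>.\<close>
lemma coeff_pcompose_qlin:
  fixes a b :: "'a poly"
  assumes "qlin q a" "qlin q b"
  shows "coeff (pcompose a b) (q ^ u) = (\<Sum>s\<le>u. coeff a (q ^ s) * coeff b (q ^ (u - s)) ^ (q ^ s))"
proof -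
  obtain N where N: "degree a < q ^ N" "degree b < q ^ N" "u < N"
    using ex_q_power_gt_degree by blast
  have "coeff (pcompose a b) (q ^ u) =
     (\<Sum>s<N. \<Sum>i<N. if i = u - s \<and> s \<le> u then coeff a (q ^ s) * coeff b (q ^ i) ^ (q ^ s) else 0)"
    unfolding pcompose_qlin_eq_sum[OF assms N(1,2)] coeff_sum coeff_monom
    by (intro sum.cong refl) auto
  also have "\<dots> = (\<Sum>s<N. if s \<le> u then coeff a (q ^ s) * coeff b (q ^ (u - s)) ^ (q ^ s) else 0)"
    using N(3) by (intro sum.cong refl) (auto simp: sum.delta' if_distrib cong: if_cong)
  also have "\<dots> = (\<Sum>s\<le>u. coeff a (q ^ s) * coeff b (q ^ (u - s)) ^ (q ^ s))"
    using N(3) by (subst sum.inter_filter[symmetric]) (auto intro!: sum.cong)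
  finally show ?thesis .
qed

lemma coeff_pcompose_qlin_nonzero:
  fixes a b :: "'a poly"
  assumes "qlin q a" "qlin q b" "coeff (pcompose a b) (q ^ u) \<noteq> 0"
  obtains s where "s \<le> u" "coeff a (q ^ s) \<noteq> 0" "coeff b (q ^ (u - s)) \<noteq> 0"
proof -
  have "\<not> (\<forall>s\<le>u. coeff a (q ^ s) = 0 \<or> coeff b (q ^ (u - s)) = 0)"
    using assms(3) q_ge_2 unfolding coeff_pcompose_qlin[OF assms(1,2)]
    by (force intro: sum.neutral simp: power_0_left)
  thus ?thesis using that by blast
qed

lemma coeff_pcompose_monom_qlin:
  fixes f :: "'a poly"
  assumes "qlin q f"
  shows "coeff (pcompose (monom c (q ^ s)) f) (q ^ i) =
    (if s \<le> i then c * coeff f (q ^ (i - s)) ^ (q ^ s) else 0)"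
  unfolding coeff_pcompose_qlin[OF qlin_monom assms]
  by (simp add: coeff_monom if_distrib[of "\<lambda>x. x * _"] sum.delta' cong: if_cong)

lemma poly_qlin_eq_sum:
  fixes f :: "'a poly"
  assumes "qlin q f" "degree f < q ^ N"
  shows "poly f x = (\<Sum>s<N. coeff f (q ^ s) * x ^ (q ^ s))"
  by (subst qlin_eq_sum_monom[OF assms]) (simp add: poly_sum poly_monom)

lemma poly_qlin_add:
  assumes "qlin q f"
  shows "poly f (x + y) = poly f x + poly (f::'a poly) y"
proof -
  obtain N where N: "degree f < q ^ N" using ex_q_power_gt_degree by blast
  show ?thesis
    by (simp add: poly_qlin_eq_sum[OF assms N] frobenius_add distrib_left sum.distrib)
qed

lemma poly_qlin_diff:
  assumes "qlin q f"
  shows "poly f (x - y) = poly f x - poly (f::'a poly) y"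
  using poly_qlin_add[OF assms, of "x - y" y] by (simp add: eq_diff_eq)

lemma poly_qlin_uminus:
  assumes "qlin q f"
  shows "poly f (- x) = - poly (f::'a poly) x"
  using poly_qlin_diff[OF assms, of 0 x] poly_0_qlin[OF assms] by simp

lemma poly_qlin_Fq_mult:
  assumes "qlin q f" "c \<in> Fq q"
  shows "poly f (c * x) = c * poly (f::'a poly) x"
proof -
  obtain N where N: "degree f < q ^ N" using ex_q_power_gt_degree by blast
  show ?thesis
    by (simp add: poly_qlin_eq_sum[OF assms(1) N] power_mult_distrib Fq_power[OF assms(2)]
        sum_distrib_left mult_ac)
qed

lemma poly_qlin_lincomb:
  assumes "qlin q f" "\<And>i. i \<in> A \<Longrightarrow> c i \<in> Fq q"
  shows "poly f (\<Sum>i\<in>A. c i * x i) = (\<Sum>i\<in>A. c i * poly (f::'a poly) (x i))"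
  using assms(2)
  by (induction A rule: infinite_finite_induct)
     (simp_all add: poly_0_qlin[OF assms(1)] poly_qlin_add[OF assms(1)] poly_qlin_Fq_mult[OF assms(1)])

lemma pcompose_qlin_add:
  fixes f :: "'a poly"
  assumes "qlin q f"
  shows "pcompose f (x + y) = pcompose f x + pcompose f y"
proof -
  obtain N where N: "degree f < q ^ N" using ex_q_power_gt_degree by blast
  show ?thesis
    by (subst (1 2 3) qlin_eq_sum_monom[OF assms N])
       (simp add: pcompose_sum pcompose_monom frobenius_add smult_add_right sum.distrib)
qed

lemma pcompose_qlin_diff:
  assumes "qlin q f"
  shows "pcompose f (x - y) = pcompose f x - pcompose (f::'a poly) y"
  using pcompose_qlin_add[OF assms, of "x - y" y] by (simp add: eq_diff_eq)

lemma pcompose_qlin_uminus: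
  assumes "qlin q f"
  shows "pcompose f (- x) = - pcompose (f::'a poly) x"
  using pcompose_qlin_diff[OF assms, of 0 x] pcompose_0_qlin[OF assms] by simp

lemma finite_q_exponents: "finite {i. coeff (f::'a poly) (q ^ i) \<noteq> 0}"
proof (rule finite_subset)
  show "{i. coeff f (q ^ i) \<noteq> 0} \<subseteq> {..degree f}"
    using less_q_power le_degree by (fastforce intro: less_imp_le order.strict_trans2)
qed auto

lemma
  fixes f :: "'a poly"
  assumes "qlin q f" "f \<noteq> 0"
  shows coeff_qdeg_nonzero: "coeff f (q ^ qdeg q f) \<noteq> 0"
    and le_qdeg: "coeff f (q ^ i) \<noteq> 0 \<Longrightarrow> i \<le> qdeg q f"
    and degree_qlin: "degree f = q ^ qdeg q f"
proof -
  have lc0: "coeff f (degree f) \<noteq> 0" using assms(2) by simp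
  then obtain d where d: "degree f = q ^ d" using assms(1) unfolding qlin_def by blast
  have d_in: "d \<in> {i. coeff f (q ^ i) \<noteq> 0}" using lc0 d by simp
  show lc: "coeff f (q ^ qdeg q f) \<noteq> 0"
    unfolding qdeg_def using Max_in[OF finite_q_exponents] d_in by blast
  show "coeff f (q ^ i) \<noteq> 0 \<Longrightarrow> i \<le> qdeg q f" for i
    unfolding qdeg_def using Max_ge[OF finite_q_exponents] by blast
  hence "d \<le> qdeg q f" using d_in by simp
  moreover have "q ^ qdeg q f \<le> degree f" using lc by (rule le_degree)
  ultimately show "degree f = q ^ qdeg q f" using d by simp
qed

lemma qdeg_eqI:
  fixes f :: "'a poly"
  assumes "qlin q f" "coeff f (q ^ D) \<noteq> 0" "\<And>i. i > D \<Longrightarrow> coeff f (q ^ i) = 0"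
  shows "qdeg q f = D"
proof -
  have nz: "f \<noteq> 0" using assms(2) by auto
  have "qdeg q f \<le> D" using coeff_qdeg_nonzero[OF assms(1) nz] assms(3) by (meson not_le)
  thus ?thesis using le_qdeg[OF assms(1) nz assms(2)] by simp
qed


lemma coeff_pcompose_qlin_nonzero_le:
  fixes a f :: "'a poly"
  assumes "qlin q a" "qlin q f" "coeff (pcompose a f) (q ^ u) \<noteq> 0"
  shows "u \<le> qdeg q a + qdeg q f"
proof -
  obtain s where s: "s \<le> u" "coeff a (q ^ s) \<noteq> 0" "coeff f (q ^ (u - s)) \<noteq> 0"
    using coeff_pcompose_qlin_nonzero[OF assms] .
  have "a \<noteq> 0" "f \<noteq> 0" using s(2,3) by auto
  hence "s \<le> qdeg q a" "u - s \<le> qdeg q f"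
    using le_qdeg[OF assms(1) _ s(2)] le_qdeg[OF assms(2) _ s(3)] by auto
  thus ?thesis using s(1) by linarith
qed

end

section \<open>\<open>F\<^sub>q\<close>-spans and subspace polynomials\<close>

definition span_Fq :: "nat \<Rightarrow> nat set \<Rightarrow> (nat \<Rightarrow> 'a::field) \<Rightarrow> 'a set" where
  "span_Fq q I v = {\<Sum>i\<in>I. c i * v i | c. \<forall>i\<in>I. c i \<in> Fq q}"

definition subspace_poly :: "nat \<Rightarrow> nat set \<Rightarrow> (nat \<Rightarrow> 'a::field) \<Rightarrow> 'a poly" where
  "subspace_poly q I v = (\<Prod>u\<in>span_Fq q I v. [:-u, 1:])"

lemma fq_span_eq_span_Fq: "fq_span q n g = span_Fq q {..<n} g"
  unfolding fq_span_def span_Fq_def by auto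

lemma Pi_g_eq_subspace_poly: "Pi_g q n g = subspace_poly q {..<n} g"
  by (simp add: Pi_g_def subspace_poly_def fq_span_eq_span_Fq)

lemma fq_indepD:
  assumes "fq_indep q v I" "\<And>i. i \<in> I \<Longrightarrow> c i \<in> Fq q" "(\<Sum>i\<in>I. c i * v i) = 0" "i \<in> I"
  shows "c i = 0"
  using assms unfolding fq_indep_def by blast

lemma fq_indepI:
  assumes "\<And>c i. (\<And>i. i \<in> I \<Longrightarrow> c i \<in> Fq q) \<Longrightarrow> (\<Sum>i\<in>I. c i * v i) = 0 \<Longrightarrow> i \<in> I \<Longrightarrow> c i = 0"
  shows "fq_indep q v I"
  using assms unfolding fq_indep_def by blast

context fq_ext
begin

lemma poly_subspace_poly_eq_0: "x \<in> span_Fq q I v \<Longrightarrow> poly (subspace_poly q I v) (x::'a) = 0"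
  by (auto simp: subspace_poly_def poly_prod)

lemma span_Fq_lincomb:
  assumes "\<And>i. i \<in> J \<Longrightarrow> x i \<in> span_Fq q I v" "\<And>i. i \<in> J \<Longrightarrow> c i \<in> Fq q"
  shows "(\<Sum>i\<in>J. c i * x i) \<in> span_Fq q I (v::nat \<Rightarrow> 'a)"
  using assms
proof (induction J rule: infinite_finite_induct)
  case (insert j J)
  obtain a where a: "\<forall>i\<in>I. a i \<in> Fq q" "x j = (\<Sum>i\<in>I. a i * v i)"
    using insert.prems(1)[of j] by (auto simp: span_Fq_def)
  obtain b where b: "\<forall>i\<in>I. b i \<in> Fq q" "(\<Sum>i\<in>J. c i * x i) = (\<Sum>i\<in>I. b i * v i)"
    using insert.IH insert.prems by (auto simp: span_Fq_def)
  have "(\<Sum>i\<in>insert j J. c i * x i) = (\<Sum>i\<in>I. (c j * a i + b i) * v i)"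
    using insert.hyps a(2) b(2) by (simp add: sum_distrib_left sum.distrib algebra_simps)
  moreover have "\<forall>i\<in>I. c j * a i + b i \<in> Fq q"
    using a(1) b(1) insert.prems(2)[of j] by (simp add: Fq_add Fq_mult)
  ultimately show ?case
    unfolding span_Fq_def by (intro CollectI exI[of _ "\<lambda>i. c j * a i + b i"]) simp
qed (auto simp: span_Fq_def intro!: exI[of _ "\<lambda>_. 0"])

lemma span_Fq_elem:
  assumes "finite I" "j \<in> I"
  shows "v j \<in> span_Fq q I (v::nat \<Rightarrow> 'a)"
proof -
  have "(\<Sum>i\<in>I. (if i = j then 1 else 0) * v i) = v j"
    using assms by (simp add: if_distrib[of "\<lambda>c. c * _"] cong: if_cong)
  thus ?thesis unfolding span_Fq_def by (intro CollectI exI[of _ "\<lambda>i. if i = j then 1 else 0"]) auto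
qed

lemma span_Fq_diff:
  assumes "x \<in> span_Fq q I v" "y \<in> span_Fq q I v"
  shows "x - y \<in> span_Fq q I (v::nat \<Rightarrow> 'a)"
  using span_Fq_lincomb[of "{0, 1::nat}" "\<lambda>i. if i = 0 then x else y" I v "\<lambda>i. if i = 0 then 1 else - 1"]
    assms by (simp add: Fq_uminus)

lemma span_Fq_Fq_mult:
  assumes "x \<in> span_Fq q I v" "c \<in> Fq q"
  shows "c * x \<in> span_Fq q I (v::nat \<Rightarrow> 'a)"
  using span_Fq_lincomb[of "{0::nat}" "\<lambda>_. x" I v "\<lambda>_. c"] assms by simp

lemma span_Fq_image_coordinates:
  "span_Fq q I v = (\<lambda>c. \<Sum>i\<in>I. c i * v i) ` (PiE I (\<lambda>_. Fq q :: 'a set))"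
proof
  show "span_Fq q I v \<subseteq> (\<lambda>c. \<Sum>i\<in>I. c i * v i) ` PiE I (\<lambda>_. Fq q)"
  proof
    fix x assume "x \<in> span_Fq q I v"
    then obtain c where c: "\<forall>i\<in>I. c i \<in> Fq q" "x = (\<Sum>i\<in>I. c i * v i)" by (auto simp: span_Fq_def)
    hence "restrict c I \<in> PiE I (\<lambda>_. Fq q) \<and> x = (\<Sum>i\<in>I. restrict c I i * v i)" by auto
    thus "x \<in> (\<lambda>c. \<Sum>i\<in>I. c i * v i) ` PiE I (\<lambda>_. Fq q)" by blast
  qed
qed (auto simp: span_Fq_def PiE_def Pi_def)

lemma card_span_Fq_le:
  assumes "finite I"
  shows "card (span_Fq q I (v::nat \<Rightarrow> 'a)) \<le> q ^ card I"
proof -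
  have "card (span_Fq q I v) \<le> card (PiE I (\<lambda>_. Fq q :: 'a set))"
    unfolding span_Fq_image_coordinates by (rule card_image_le) (simp add: assms finite_PiE)
  thus ?thesis using assms by (simp add: card_PiE card_Fq)
qed

lemma card_span_Fq:
  assumes "finite I" "fq_indep q v I"
  shows "card (span_Fq q I (v::nat \<Rightarrow> 'a)) = q ^ card I"
proof -
  have "inj_on (\<lambda>c. \<Sum>i\<in>I. c i * v i) (PiE I (\<lambda>_. Fq q :: 'a set))"
  proof (rule inj_onI)
    fix c c' assume c: "c \<in> PiE I (\<lambda>_. Fq q)" and c': "c' \<in> PiE I (\<lambda>_. Fq q)"
      and eq: "(\<Sum>i\<in>I. c i * v i) = (\<Sum>i\<in>I. c' i * v i)"
    have "(\<Sum>i\<in>I. (c i - c' i) * v i) = 0"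
      using eq by (simp add: algebra_simps sum_subtractf)
    moreover have "\<forall>i\<in>I. c i - c' i \<in> Fq q" using c c' by (auto intro: Fq_diff)
    ultimately have "\<forall>i\<in>I. c i - c' i = 0"
      using fq_indepD[OF assms(2), of "\<lambda>i. c i - c' i"] by blast
    thus "c = c'" using c c' by (intro PiE_ext) auto
  qed
  hence "card (span_Fq q I v) = card (PiE I (\<lambda>_. Fq q :: 'a set))"
    unfolding span_Fq_image_coordinates by (rule card_image)
  thus ?thesis using assms by (simp add: card_PiE card_Fq)
qed

lemma fq_indep_insertD:
  assumes "finite I" "j \<notin> I" "fq_indep q v (insert j I)"
  shows "fq_indep q (v::nat \<Rightarrow> 'a) I" and "v j \<notin> span_Fq q I v"
proof -
  have sum_upd: "(\<Sum>i\<in>insert j I. (if i = j then a else c i) * v i) = a * v j + (\<Sum>i\<in>I. c i * v i)"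
    for a c using assms(1,2) by (subst sum.insert) (auto intro!: sum.cong)
  show "fq_indep q v I"
  proof (rule fq_indepI)
    fix c i assume c: "\<And>i. i \<in> I \<Longrightarrow> c i \<in> Fq q" "(\<Sum>i\<in>I. c i * v i) = 0" "i \<in> I"
    have "(if i = j then 0 else c i) = 0"
      by (rule fq_indepD[OF assms(3), of "\<lambda>i. if i = j then 0 else c i"]) (use c sum_upd in auto)
    thus "c i = 0" using c(3) assms(2) by (cases "i = j") auto
  qed
  show "v j \<notin> span_Fq q I v"
  proof
    assume "v j \<in> span_Fq q I v"
    then obtain c where c: "\<forall>i\<in>I. c i \<in> Fq q" "v j = (\<Sum>i\<in>I. c i * v i)"
      by (auto simp: span_Fq_def)
    have "(if j = j then -1 else c j) = (0::'a)"
      by (rule fq_indepD[OF assms(3), of "\<lambda>i. if i = j then -1 else c i"])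
         (use c sum_upd Fq_uminus[OF Fq_1] in auto)
    thus False by simp
  qed
qed

lemma fq_indep_insertI:
  assumes "finite I" "j \<notin> I" "fq_indep q v I" "v j \<notin> span_Fq q I v"
  shows "fq_indep q (v::nat \<Rightarrow> 'a) (insert j I)"
proof (rule fq_indepI)
  fix c i assume c: "\<And>i. i \<in> insert j I \<Longrightarrow> c i \<in> Fq q" "(\<Sum>i\<in>insert j I. c i * v i) = 0"
    "i \<in> insert j I"
  have s: "c j * v j + (\<Sum>i\<in>I. c i * v i) = 0" using c(2) assms(1,2) by (simp add: sum.insert)
  have cj: "c j = 0"
  proof (rule ccontr)
    assume "c j \<noteq> 0"
    hence "v j = - inverse (c j) * (\<Sum>i\<in>I. c i * v i)"
      using s by (simp add: field_simps add_eq_0_iff2)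
    also have "\<dots> = (\<Sum>i\<in>I. (- inverse (c j) * c i) * v i)"
      by (simp add: sum_distrib_left mult.assoc)
    also have "\<dots> \<in> span_Fq q I v"
      using c(1) by (intro span_Fq_lincomb span_Fq_elem assms(1)) (auto intro!: Fq_mult Fq_uminus Fq_inverse)
    finally show False using assms(4) by simp
  qed
  hence "(\<Sum>i\<in>I. c i * v i) = 0" using s by simp
  thus "c i = 0" using cj c(1,3) fq_indepD[OF assms(3), of c i] by auto
qed

lemma span_Fq_insert:
  assumes "finite I" "j \<notin> I"
  shows "span_Fq q (insert j I) v = (\<lambda>(c, u). u + c * v j) ` (Fq q \<times> span_Fq q I (v::nat \<Rightarrow> 'a))"
proof
  show "span_Fq q (insert j I) v \<subseteq> (\<lambda>(c, u). u + c * v j) ` (Fq q \<times> span_Fq q I v)"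
  proof
    fix x assume "x \<in> span_Fq q (insert j I) v"
    then obtain c where c: "\<forall>i\<in>insert j I. c i \<in> Fq q" "x = (\<Sum>i\<in>insert j I. c i * v i)"
      by (auto simp: span_Fq_def)
    have "x = (\<Sum>i\<in>I. c i * v i) + c j * v j" using c(2) assms by (simp add: sum.insert)
    moreover have "(\<Sum>i\<in>I. c i * v i) \<in> span_Fq q I v" using c(1) by (auto simp: span_Fq_def)
    ultimately show "x \<in> (\<lambda>(c, u). u + c * v j) ` (Fq q \<times> span_Fq q I v)"
      using c(1) by (intro image_eqI[of _ _ "(c j, \<Sum>i\<in>I. c i * v i)"]) auto
  qed
next
  show "(\<lambda>(c, u). u + c * v j) ` (Fq q \<times> span_Fq q I v) \<subseteq> span_Fq q (insert j I) v"
  proof clarify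
    fix a :: 'a and u assume a: "a \<in> Fq q" and "u \<in> span_Fq q I v"
    then obtain c where c: "\<forall>i\<in>I. c i \<in> Fq q" "u = (\<Sum>i\<in>I. c i * v i)"
      by (auto simp: span_Fq_def)
    have "u + a * v j = (\<Sum>i\<in>insert j I. (c(j := a)) i * v i)"
      using assms c(2) by (simp add: sum.insert) (intro sum.cong, auto)
    moreover have "\<forall>i\<in>insert j I. (c(j := a)) i \<in> Fq q" using a c(1) by auto
    ultimately show "u + a * v j \<in> span_Fq q (insert j I) v"
      unfolding span_Fq_def by blast
  qed
qed

lemma poly_qlin_vanishes_on_span:
  assumes "qlin q f" "\<And>i. i \<in> I \<Longrightarrow> poly f (v i) = 0" "x \<in> span_Fq q I v"
  shows "poly (f::'a poly) x = 0"
proof -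
  obtain c where c: "\<forall>i\<in>I. c i \<in> Fq q" "x = (\<Sum>i\<in>I. c i * v i)"
    using assms(3) by (auto simp: span_Fq_def)
  thus ?thesis using assms(2) by (simp add: poly_qlin_lincomb[OF assms(1)])
qed

text \<open>A nonzero \<open>q\<close>-linearized polynomial of \<open>q\<close>-degree less than \<open>dim V\<close> has fewer roots than \<open>|V|\<close>.\<close>
lemma qlin_vanishing_on_span_eq_0:
  assumes "finite I" "fq_indep q v I" "qlin q f" "\<And>x. x \<in> span_Fq q I v \<Longrightarrow> poly f x = 0"
    and "\<And>i. i \<ge> card I \<Longrightarrow> coeff f (q ^ i) = 0"
  shows "(f::'a poly) = 0"
proof (rule ccontr)
  assume f0: "f \<noteq> 0"
  have "qdeg q f < card I"
    using coeff_qdeg_nonzero[OF assms(3) f0] assms(5) not_less by blast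
  hence "degree f < card (span_Fq q I v)"
    using degree_qlin[OF assms(3) f0] card_span_Fq[OF assms(1,2)] by simp
  also have "card (span_Fq q I v) \<le> degree f"
    using assms(4) by (intro card_le_degree_if_roots f0)
  finally show False by simp
qed

lemma card_span_le_card_image_mult:
  assumes "finite I" "fq_indep q v I" "qlin q h" "h \<noteq> 0"
  shows "q ^ card I \<le> card (poly h ` span_Fq q I v) * q ^ qdeg q (h :: 'a poly)"
proof -
  let ?V = "span_Fq q I v"
  have ker: "card {x \<in> ?V. poly h x = 0} \<le> q ^ qdeg q h"
    using card_le_degree_if_roots[OF assms(4), of "{x \<in> ?V. poly h x = 0}"] degree_qlin[OF assms(3,4)]
    by simp
  have "q ^ card I = card ?V" using card_span_Fq[OF assms(1,2)] by simp
  also have "\<dots> \<le> card (poly h ` ?V) * card {x \<in> ?V. poly h x = 0}"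
    by (rule card_le_card_image_mult_card_zeros) (auto intro: span_Fq_diff simp: poly_qlin_diff[OF assms(3)])
  also have "\<dots> \<le> card (poly h ` ?V) * q ^ qdeg q h" using ker by (rule mult_le_mono2)
  finally show ?thesis .
qed

lemma pcompose_qlin_shift:
  assumes "qlin q f"
  shows "pcompose f [:b, 1:] = f + [:poly (f::'a poly) b:]"
proof -
  have "[:b, 1:] = [:0, 1:] + [:b:]" by simp
  thus ?thesis by (simp only: pcompose_qlin_add[OF assms] pcompose_idR pcompose_pCons_0)
qed

lemma prod_Fq_multiples_linear_factors:
  fixes a :: 'a
  assumes "a \<noteq> 0"
  shows "(\<Prod>c\<in>Fq q. [:- (c * a), 1:]) = monom 1 q - monom (a ^ (q - 1)) 1"
proof (rule poly_eqI_degree_lead_coeff[of _ q _ "(\<lambda>c. c * a) ` Fq q"])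
  have deg: "degree (\<Prod>c\<in>Fq q. [:- (c * a), 1:]) = q"
    by (subst degree_prod_eq_sum_degree) (auto simp: card_Fq)
  thus "degree (\<Prod>c\<in>Fq q. [:- (c * a), 1:]) \<le> q" by simp
  have "coeff (\<Prod>c\<in>Fq q. [:- (c * a), 1:]) q = lead_coeff (\<Prod>c\<in>Fq q. [:- (c * a), 1:])"
    using deg by simp
  also have "\<dots> = 1" by (simp add: lead_coeff_prod)
  also have "\<dots> = coeff (monom 1 q - monom (a ^ (q - 1)) 1) q" using q_ge_2 by simp
  finally show "coeff (\<Prod>c\<in>Fq q. [:- (c * a), 1:]) q = coeff (monom 1 q - monom (a ^ (q - 1)) 1) q" .
  show "degree (monom 1 q - monom (a ^ (q - 1)) 1) \<le> q"
    using q_ge_2 by (intro degree_diff_le order_trans[OF degree_monom_le]) auto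
  have "inj_on (\<lambda>c. c * a) (Fq q)" using assms by (auto simp: inj_on_def)
  thus "q \<le> card ((\<lambda>c. c * a) ` Fq q)" by (simp add: card_image card_Fq)
  fix z assume "z \<in> (\<lambda>c. c * a) ` Fq q"
  then obtain c where c: "c \<in> Fq q" "z = c * a" by auto
  obtain q' where q': "q = Suc q'" using q_ge_2 by (cases q) auto
  have "poly (monom 1 q - monom (a ^ (q - 1)) 1) z = c ^ q * a ^ q - c * a ^ q"
    by (simp add: poly_monom c(2) q' power_mult_distrib mult_ac)
  also have "c ^ q = c" using c(1) by (simp add: Fq_def)
  finally show "poly (\<Prod>c\<in>Fq q. [:- (c * a), 1:]) z = poly (monom 1 q - monom (a ^ (q - 1)) 1) z"
    using c by (auto simp: poly_prod intro!: prod_zero)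
qed

text \<open>
  Adjoining \<open>v j\<close> to the span replaces \<open>P\<close> by \<open>\<Prod>c\<in>F\<^sub>q. P(x - c v\<^sub>j) = \<Prod>c\<in>F\<^sub>q. (P - c P(v\<^sub>j))\<close>,
  which is the polynomial \<open>y\<^sup>q - P(v\<^sub>j)\<^sup>q\<^sup>-\<^sup>1 y\<close> of the previous lemma composed with \<open>P\<close>.
\<close>
lemma subspace_poly_insert:
  assumes "finite I" "j \<notin> I" "fq_indep q v (insert j I)" "qlin q (subspace_poly q I v)"
  defines "P \<equiv> subspace_poly q I (v::nat \<Rightarrow> 'a)"
  shows "subspace_poly q (insert j I) v = P ^ q - smult (poly P (v j) ^ (q - 1)) P"
    and "poly P (v j) \<noteq> 0"
proof -
  define S where "S = span_Fq q I v"
  define a where "a = poly P (v j)"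
  have vj: "v j \<notin> S" using fq_indep_insertD(2)[OF assms(1-3)] by (simp add: S_def)
  thus a0: "poly P (v j) \<noteq> 0"
    by (auto simp: P_def subspace_poly_def S_def poly_prod)
  have inj: "inj_on (\<lambda>(c, u). u + c * v j) (Fq q \<times> S)"
  proof (rule inj_onI, clarify)
    fix c u c' u' assume c: "c \<in> Fq q" "u \<in> S" "c' \<in> Fq q" "u' \<in> S" "u + c * v j = u' + c' * v j"
    show "c = c' \<and> u = u'"
    proof (cases "c = c'")
      case False
      hence "v j = inverse (c - c') * (u' - u)" using c(5) by (simp add: field_simps)
      moreover have "inverse (c - c') * (u' - u) \<in> S"
        using c unfolding S_def by (intro span_Fq_Fq_mult span_Fq_diff Fq_inverse Fq_diff)
      ultimately show ?thesis using vj by simp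
    qed (use c in auto)
  qed
  have "subspace_poly q (insert j I) v = (\<Prod>x\<in>(\<lambda>(c, u). u + c * v j) ` (Fq q \<times> S). [:- x, 1:])"
    by (simp add: subspace_poly_def span_Fq_insert[OF assms(1,2)] S_def)
  also have "\<dots> = (\<Prod>(c, u)\<in>Fq q \<times> S. [:- (u + c * v j), 1:])"
    by (subst prod.reindex[OF inj]) (simp add: case_prod_beta')
  also have "\<dots> = (\<Prod>c\<in>Fq q. pcompose P [:- (c * v j), 1:])"
    by (simp add: prod.cartesian_product[symmetric] P_def subspace_poly_def S_def pcompose_prod
        pcompose_pCons algebra_simps)
  also have "\<dots> = (\<Prod>c\<in>Fq q. pcompose [:- (c * a), 1:] P)"
    using assms(4) by (intro prod.cong refl)
       (simp add: pcompose_qlin_shift poly_qlin_uminus poly_qlin_Fq_mult P_def a_def pcompose_pCons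
         algebra_simps)
  also have "\<dots> = P ^ q - smult (a ^ (q - 1)) P"
    using a0 by (simp add: pcompose_prod[symmetric] prod_Fq_multiples_linear_factors pcompose_diff
        pcompose_monom a_def)
  finally show "subspace_poly q (insert j I) v = P ^ q - smult (poly P (v j) ^ (q - 1)) P"
    by (simp add: a_def)
qed

lemma subspace_poly_props:
  assumes "finite I" "fq_indep q v I"
  shows "qlin q (subspace_poly q I v) \<and> coeff (subspace_poly q I v) (q ^ card I) = 1
    \<and> degree (subspace_poly q I (v::nat \<Rightarrow> 'a)) = q ^ card I"
  using assms
proof (induction I rule: finite_induct)
  case empty
  have "span_Fq q {} v = {0}" by (auto simp: span_Fq_def)
  hence "subspace_poly q {} v = monom 1 (q ^ 0)" by (simp add: subspace_poly_def monom_Suc monom_0)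
  thus ?case using qlin_monom[of "1::'a" 0] by (simp add: degree_monom_eq)
next
  case (insert j I)
  define P where "P = subspace_poly q I v"
  define c where "c = poly P (v j) ^ (q - 1)"
  have IH: "qlin q P" "coeff P (q ^ card I) = 1" "degree P = q ^ card I"
    using insert fq_indep_insertD(1)[OF insert(1,2)] by (auto simp: P_def)
  have eq: "subspace_poly q (insert j I) v = P ^ q - smult c P"
    using subspace_poly_insert(1)[OF insert(1,2,4)] IH(1) by (simp add: P_def c_def)
  have P0: "P \<noteq> 0" using IH by auto
  obtain N where N: "degree P < q ^ N" using ex_q_power_gt_degree by blast
  have "qlin q (P ^ (q ^ 1))"
    unfolding power_q_power_qlin[OF IH(1) N] by (intro qlin_sum qlin_monom)
  hence ql: "qlin q (subspace_poly q (insert j I) v)" unfolding eq by (auto intro: qlin_diff qlin_smult IH)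
  have deg_Pq: "degree (P ^ q) = q ^ card (insert j I)"
    using insert(1,2) IH(3) by (simp add: degree_power_eq[OF P0])
  have deg_lt: "degree (smult c P) < q ^ card (insert j I)"
    using insert(1,2) IH(3) q_ge_2 degree_smult_le[of c P] by simp
  have "degree (subspace_poly q (insert j I) v) = q ^ card (insert j I)"
    using deg_Pq deg_lt degree_add_eq_left[of "- smult c P" "P ^ q"] unfolding eq by simp
  moreover have "coeff (subspace_poly q (insert j I) v) (q ^ card (insert j I)) = 1"
  proof -
    have "coeff (smult c P) (q ^ card (insert j I)) = 0" using deg_lt by (rule coeff_eq_0)
    moreover have "coeff (P ^ q) (q ^ card (insert j I)) = lead_coeff (P ^ q)" using deg_Pq by simp
    moreover have "lead_coeff (P ^ q) = 1" using IH(2,3) by (simp add: lead_coeff_power)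
    ultimately show ?thesis unfolding eq by simp
  qed
  ultimately show ?case using ql by blast
qed

lemma
  assumes "finite I" "fq_indep q v I"
  shows qlin_subspace_poly: "qlin q (subspace_poly q I (v::nat \<Rightarrow> 'a))"
    and qdeg_subspace_poly: "qdeg q (subspace_poly q I v) = card I"
    and lead_coeff_subspace_poly: "coeff (subspace_poly q I v) (q ^ card I) = 1"
    and coeff_subspace_poly_eq_0: "i > card I \<Longrightarrow> coeff (subspace_poly q I v) (q ^ i) = 0"
  using subspace_poly_props[OF assms] by (auto intro!: coeff_eq_0 qdeg_eqI)

end

section \<open>The interpolating polynomial \<open>\<Lambda>\<close>\<close>

lemma poly_det: "poly (det D) a = det (map_mat (\<lambda>p. poly p a) (D :: 'a::comm_ring_1 poly mat))"
proof -
  interpret ev: comm_ring_hom "\<lambda>p. poly p a" by unfold_locales auto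
  show ?thesis by simp
qed

lemma det_map_const_poly: "det (map_mat (\<lambda>x. [:x:]) B) = [:det (B :: 'a::comm_ring_1 mat):]"
proof -
  interpret cst: comm_ring_hom "\<lambda>x::'a. [:x:]" by unfold_locales auto
  show ?thesis by simp
qed

context fq_ext
begin

text \<open>A kernel vector of the transposed Moore matrix is the coefficient vector of a
  \<open>q\<close>-linearized polynomial of \<open>q\<close>-degree below \<open>n\<close> vanishing on the span of the \<open>g\<^sub>i\<close>.\<close>
lemma det_Moore_nonzero:
  assumes "fq_indep q (g::nat \<Rightarrow> 'a) {..<n}"
  shows "det (Mmat q n g) \<noteq> 0"
proof
  assume "det (Mmat q n g) = 0"
  let ?M = "Mmat q n g"
  have M: "?M \<in> carrier_mat n n" by (simp add: Mmat_def)
  have "det (transpose_mat ?M) = 0" using \<open>det ?M = 0\<close> det_transpose[OF M] by simp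
  then obtain w where w: "w \<in> carrier_vec n" "w \<noteq> 0\<^sub>v n" "transpose_mat ?M *\<^sub>v w = 0\<^sub>v n"
    using det_0_iff_vec_prod_zero[of "transpose_mat ?M" n] M by auto
  define A :: "'a poly" where "A = (\<Sum>j<n. monom (w $ j) (q ^ j))"
  have qA: "qlin q A" unfolding A_def by (intro qlin_sum) simp
  have cA: "coeff A (q ^ j) = (if j < n then w $ j else 0)" for j
    unfolding A_def coeff_sum coeff_monom by (simp add: if_distrib cong: if_cong)
  have "poly A (g l) = 0" if "l < n" for l
  proof -
    have "poly A (g l) = (\<Sum>j<n. w $ j * g l ^ (q ^ j))"
      by (simp add: A_def poly_sum poly_monom)
    also have "\<dots> = (transpose_mat ?M *\<^sub>v w) $ l"
      using that w(1) by (simp add: scalar_prod_def Mmat_def atLeast0LessThan mult.commute)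
    finally show ?thesis using w(3) that by simp
  qed
  hence "poly A x = 0" if "x \<in> span_Fq q {..<n} g" for x
    using poly_qlin_vanishes_on_span[OF qA _ that] by simp
  hence "A = 0"
    using assms qA by (intro qlin_vanishing_on_span_eq_0[of "{..<n}" g]) (auto simp: cA)
  hence "w = 0\<^sub>v n"
    using w(1) cA by (intro eq_vecI) (auto, metis coeff_0)
  thus False using w(2) by simp
qed

lemma poly_det_Dmat:
  assumes i: "i < n" and j: "j < n"
  shows "poly (det (Dmat q n g i)) (g j) =
    (if i = j then (-1) ^ (n - 1 - i) * det (Mmat q n (g :: nat \<Rightarrow> 'a)) else 0)"
proof -
  let ?col = "\<lambda>l. if l < i then l else Suc l"
  let ?E = "mat n n (\<lambda>(r, l). (if ?col l < n then g (?col l) else g j) ^ (q ^ r))"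
  have E: "?E \<in> carrier_mat n n" by simp
  have "poly (det (Dmat q n g i)) (g j) = det ?E"
    unfolding poly_det by (rule arg_cong[of _ _ det]) (auto simp: Dmat_def Mext_def poly_monom)
  also have "\<dots> = (if i = j then (-1) ^ (n - 1 - i) * det (Mmat q n g) else 0)"
  proof (cases "i = j")
    case False
    define l1 where "l1 = (if j < i then j else j - 1)"
    have l1: "l1 < n - 1" using i j False by (auto simp: l1_def)
    have "col ?E l1 = col ?E (n - 1)"
      using l1 i j False by (intro eq_vecI) (auto simp: l1_def)
    hence "det ?E = 0"
      by (intro det_identical_columns[OF E, of l1 "n - 1"]) (use l1 in auto)
    thus ?thesis using False by simp
  next
    case True
    text \<open>Moving column \<open>i\<close> of the Moore matrix to the end gives \<open>?E\<close>.\<close>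
    have M: "Mmat q n g \<in> carrier_mat n n" by (simp add: Mmat_def)
    have "det (Mmat q n g) = (- 1) ^ (1 * (n - 1 - i)) *
      det (mat n n (\<lambda>(r, c). Mmat q n g $$ (r, if c < i then c else if c < i + (n - 1 - i) then c + 1 else c - (n - 1 - i))))"
      by (rule det_swap_final_cols[OF M]) (use i in simp)
    also have "mat n n (\<lambda>(r, c). Mmat q n g $$ (r, if c < i then c else if c < i + (n - 1 - i) then c + 1 else c - (n - 1 - i))) = ?E"
    proof (rule eq_matI)
      fix r c assume "r < dim_row ?E" "c < dim_col ?E"
      hence r: "r < n" and c: "c < n" by auto
      consider "c < i" | "i \<le> c" "c < n - 1" | "c = n - 1" using c by linarith
      thus "mat n n (\<lambda>(r, c). Mmat q n g $$ (r, if c < i then c else if c < i + (n - 1 - i) then c + 1 else c - (n - 1 - i))) $$ (r, c) = ?E $$ (r, c)"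
        by cases (use r c i True in \<open>auto simp: Mmat_def\<close>)
    qed auto
    finally have "det (Mmat q n g) = (-1) ^ (n - 1 - i) * det ?E" by simp
    hence "(-1) ^ (n - 1 - i) * det (Mmat q n g) = ((-1) ^ (n - 1 - i) * (-1) ^ (n - 1 - i)) * det ?E"
      by (simp add: mult.assoc)
    thus ?thesis using True by (simp flip: power_add add: power_mult[symmetric] mult_2[symmetric])
  qed
  finally show ?thesis .
qed

lemma poly_Lambda_interpolates:
  assumes "fq_indep q (g::nat \<Rightarrow> 'a) {..<n}" "j < n"
  shows "poly (Lambda q n g r) (g j) = r j"
proof -
  have "poly (Lambda q n g r) (g j) = inverse (det (Mmat q n g)) *
     ((-1) ^ (n - 1 - j) * r j * ((-1) ^ (n - 1 - j) * det (Mmat q n g)))"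
    using assms(2) by (simp add: Lambda_def poly_sum poly_det_Dmat if_distrib[of "\<lambda>x. _ * x"]
        sum.delta' cong: if_cong)
  also have "\<dots> = r j"
    using det_Moore_nonzero[OF assms(1)]
    by (simp add: field_simps flip: power_add add: power_mult[symmetric] mult_2[symmetric])
  finally show ?thesis .
qed

text \<open>Expanding along the last column, which holds the monomials \<open>x\<^sup>[\<^sup>r\<^sup>]\<close>, shows that the
  determinant is \<open>q\<close>-linearized.\<close>
lemma qlin_det_Dmat:
  assumes i: "i < n"
  shows "qlin q (det (Dmat q n (g::nat \<Rightarrow> 'a) i))"
proof -
  let ?D = "Dmat q n g i"
  let ?B = "\<lambda>r. map_mat (\<lambda>p. coeff p 0) (mat_delete ?D r (n - 1))"
  have D: "?D \<in> carrier_mat n n" by (simp add: Dmat_def)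
  have "det ?D = (\<Sum>r<n. ?D $$ (r, n - 1) * cofactor ?D r (n - 1))"
    by (rule laplace_expansion_column[OF D]) (use i in simp)
  also have "\<dots> = (\<Sum>r<n. smult ((-1) ^ (r + (n - 1)) * det (?B r)) (monom 1 (q ^ r)))"
  proof (intro sum.cong refl)
    fix r assume r: "r \<in> {..<n}"
    have "mat_delete ?D r (n - 1) = map_mat (\<lambda>x. [:x:]) (?B r)"
      by (rule eq_matI) (auto simp: mat_delete_def Dmat_def Mext_def)
    hence "det (mat_delete ?D r (n - 1)) = [:det (?B r):]"
      by (rule trans[OF arg_cong[where f = det] det_map_const_poly])
    moreover have "(-1 :: 'a poly) ^ k = [:(-1) ^ k:]" for k
      by (induction k) auto
    ultimately have "cofactor ?D r (n - 1) = [:(-1) ^ (r + (n - 1)) * det (?B r):]"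
      by (simp add: cofactor_def)
    moreover have "?D $$ (r, n - 1) = monom 1 (q ^ r)"
      using r i by (simp add: Dmat_def Mext_def less_diff_conv2)
    ultimately show "?D $$ (r, n - 1) * cofactor ?D r (n - 1) =
        smult ((-1) ^ (r + (n - 1)) * det (?B r)) (monom 1 (q ^ r))"
      by (simp add: mult.commute)
  qed
  finally show ?thesis by (simp add: qlin_sum qlin_smult)
qed

lemma qlin_Lambda: "qlin q (Lambda q n (g::nat \<Rightarrow> 'a) r)"
  unfolding Lambda_def by (intro qlin_smult qlin_sum) (simp add: qlin_det_Dmat)

end

section \<open>Right division by a monic \<open>q\<close>-linearized polynomial\<close>

context fq_ext
begin

lemma coeff_cancel_top_eq_0:
  fixes Pi Q :: "'a poly"
  assumes qPi: "qlin q Pi" and lc: "coeff Pi (q ^ n) = 1" and hi: "\<And>i. i > n \<Longrightarrow> coeff Pi (q ^ i) = 0"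
    and "n \<le> D" "\<And>i. i > D \<Longrightarrow> coeff Q (q ^ i) = 0" "D \<le> i"
  shows "coeff (Q - pcompose (monom (coeff Q (q ^ D)) (q ^ (D - n))) Pi) (q ^ i) = 0"
proof (cases "i = D")
  case False
  hence "i - (D - n) > n" "i > D" using assms(4,6) by auto
  thus ?thesis using assms(5) hi q_ge_2 by (simp add: coeff_pcompose_monom_qlin[OF qPi] power_0_left)
qed (use assms(4) lc in \<open>simp add: coeff_pcompose_monom_qlin[OF qPi]\<close>)

lemma qlin_right_division:
  fixes Pi P :: "'a poly"
  assumes qPi: "qlin q Pi" and lc: "coeff Pi (q ^ n) = 1" and hi: "\<And>i. i > n \<Longrightarrow> coeff Pi (q ^ i) = 0"
    and qP: "qlin q P"
  obtains \<beta> R where "qlin q \<beta>" "qlin q R" "\<And>i. i \<ge> n \<Longrightarrow> coeff R (q ^ i) = 0"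
    "P = pcompose \<beta> Pi + R"
proof -
  have "\<exists>\<beta> R. qlin q \<beta> \<and> qlin q R \<and> (\<forall>i\<ge>n. coeff R (q ^ i) = 0) \<and> Q = pcompose \<beta> Pi + R"
    if "qlin q Q" "\<forall>i\<ge>D. coeff Q (q ^ i) = 0" for D and Q :: "'a poly"
    using that
  proof (induction D arbitrary: Q)
    case 0
    thus ?case by - (rule exI[of _ 0], rule exI[of _ Q], auto)
  next
    case (Suc D)
    show ?case
    proof (cases "D < n")
      case True
      thus ?thesis using Suc.prems by - (rule exI[of _ 0], rule exI[of _ Q], auto)
    next
      case False
      define \<mu> where "\<mu> = monom (coeff Q (q ^ D)) (q ^ (D - n))"
      have "qlin q (Q - pcompose \<mu> Pi)"
        unfolding \<mu>_def by (intro qlin_diff Suc.prems qlin_pcompose qPi) simp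
      moreover have "\<forall>i\<ge>D. coeff (Q - pcompose \<mu> Pi) (q ^ i) = 0"
        using False Suc.prems(2) unfolding \<mu>_def
        by (intro allI impI coeff_cancel_top_eq_0[OF qPi lc hi]) auto
      ultimately obtain \<beta> R where "qlin q \<beta>" "qlin q R" "\<forall>i\<ge>n. coeff R (q ^ i) = 0"
          "Q - pcompose \<mu> Pi = pcompose \<beta> Pi + R"
        using Suc.IH by blast
      thus ?thesis
        by - (rule exI[of _ "\<beta> + \<mu>"], rule exI[of _ R],
          auto intro: qlin_add simp: \<mu>_def pcompose_add algebra_simps)
    qed
  qed
  moreover have "coeff P (q ^ i) = 0" if "i \<ge> degree P + 1" for i
    using less_q_power[of i] that by (intro coeff_eq_0) linarith
  ultimately show ?thesis using qP that by blast
qed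
end


section \<open>Leading monomials\<close>

text \<open>\<open>rank\<close> embeds the \<open>(0,k-1)\<close>-weighted term-over-position order on monomials into \<open>nat\<close>.\<close>
definition rank :: "nat \<Rightarrow> nat \<times> nat \<Rightarrow> nat" where
  "rank k mo = 2 * wval k mo + snd mo"

definition qlin_pair :: "nat \<Rightarrow> 'a::zero poly \<times> 'a poly \<Rightarrow> bool" where
  "qlin_pair q v \<longleftrightarrow> qlin q (fst v) \<and> qlin q (snd v)"

lemma supp_snd: "mo \<in> supp q v \<Longrightarrow> snd mo \<in> {1, 2}"
  by (auto simp: supp_def)

lemma mless_iff_rank_less:
  "snd m1 \<in> {1, 2} \<Longrightarrow> snd m2 \<in> {1, 2} \<Longrightarrow> mless k m1 m2 \<longleftrightarrow> rank k m1 < rank k m2"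
  unfolding mless_def rank_def by auto

lemma rank_inj:
  "snd m1 \<in> {1, 2} \<Longrightarrow> snd m2 \<in> {1, 2} \<Longrightarrow> rank k m1 = rank k m2 \<Longrightarrow> m1 = m2"
  unfolding rank_def wval_def by (cases m1, cases m2) (auto split: if_splits; presburger)

lemma wval_mono_rank:
  "snd m1 \<in> {1, 2} \<Longrightarrow> snd m2 \<in> {1, 2} \<Longrightarrow> rank k m1 \<le> rank k m2 \<Longrightarrow> wval k m1 \<le> wval k m2"
  unfolding rank_def by auto

lemma lm_eqI:
  assumes "mo \<in> supp q v" "\<And>m'. m' \<in> supp q v \<Longrightarrow> m' \<noteq> mo \<Longrightarrow> rank k m' < rank k mo"
  shows "lm q k v = mo"
  unfolding lm_def
proof (rule the_equality)
  show "mo \<in> supp q v \<and> (\<forall>m'\<in>supp q v. m' \<noteq> mo \<longrightarrow> mless k m' mo)"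
    using assms mless_iff_rank_less[OF supp_snd supp_snd[OF assms(1)]] by blast
next
  fix m2 assume m2: "m2 \<in> supp q v \<and> (\<forall>m'\<in>supp q v. m' \<noteq> m2 \<longrightarrow> mless k m' m2)"
  show "m2 = mo"
  proof (rule ccontr)
    assume ne: "m2 \<noteq> mo"
    hence "mless k mo m2" using m2 assms(1) by auto
    hence "rank k mo < rank k m2" using mless_iff_rank_less[OF supp_snd[OF assms(1)] supp_snd] m2 by blast
    moreover have "rank k m2 < rank k mo" using assms(2) m2 ne by blast
    ultimately show False by simp
  qed
qed

context fq_ext
begin

lemma finite_supp: "finite (supp q (v :: 'a poly \<times> 'a poly))"
proof (rule finite_subset)
  show "supp q v \<subseteq> {..degree (fst v) + degree (snd v)} \<times> {1, 2}"
  proof clarify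
    fix i j assume "(i, j) \<in> supp q v"
    hence "j \<in> {1, 2}" "q ^ i \<le> degree (comp_of j v)" by (auto simp: supp_def intro: le_degree)
    moreover have "degree (comp_of j v) \<le> degree (fst v) + degree (snd v)" by (simp add: comp_of_def)
    ultimately show "i \<in> {..degree (fst v) + degree (snd v)} \<and> j \<in> {1, 2}"
      using less_q_power[of i] by simp
  qed
qed simp

lemma lm_in_supp_and_max:
  assumes "supp q (v :: 'a poly \<times> 'a poly) \<noteq> {}"
  shows "lm q k v \<in> supp q v"
    and "\<And>m'. m' \<in> supp q v \<Longrightarrow> m' \<noteq> lm q k v \<Longrightarrow> rank k m' < rank k (lm q k v)"
proof -
  have fin: "finite (rank k ` supp q v)" using finite_supp by simp
  have "Max (rank k ` supp q v) \<in> rank k ` supp q v" using Max_in[OF fin] assms by simp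
  then obtain mo where mo: "mo \<in> supp q v" "rank k mo = Max (rank k ` supp q v)" by auto
  have mx: "rank k m' < rank k mo" if "m' \<in> supp q v" "m' \<noteq> mo" for m'
  proof -
    have "rank k m' \<noteq> rank k mo" using rank_inj supp_snd that mo(1) by blast
    moreover have "rank k m' \<le> rank k mo" using Max_ge[OF fin] that(1) mo(2) by simp
    ultimately show ?thesis by simp
  qed
  have "lm q k v = mo" by (rule lm_eqI[OF mo(1) mx])
  thus "lm q k v \<in> supp q v" "\<And>m'. m' \<in> supp q v \<Longrightarrow> m' \<noteq> lm q k v \<Longrightarrow> rank k m' < rank k (lm q k v)"
    using mo(1) mx by auto
qed

lemma rank_le_lm:
  "supp q (v :: 'a poly \<times> 'a poly) \<noteq> {} \<Longrightarrow> m' \<in> supp q v \<Longrightarrow> rank k m' \<le> rank k (lm q k v)"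
  using lm_in_supp_and_max(2)[of v m' k] by fastforce

lemma wdeg_eq_wval_lm:
  assumes "supp q (v :: 'a poly \<times> 'a poly) \<noteq> {}"
  shows "wdeg q k v = wval k (lm q k v)"
  unfolding wdeg_def
proof (rule Max_eqI)
  show "finite (wval k ` supp q v)" using finite_supp by simp
  show "wval k (lm q k v) \<in> wval k ` supp q v" using lm_in_supp_and_max(1)[OF assms] by simp
  fix y assume "y \<in> wval k ` supp q v"
  then obtain m' where "m' \<in> supp q v" "y = wval k m'" by auto
  thus "y \<le> wval k (lm q k v)"
    using wval_mono_rank supp_snd rank_le_lm[OF assms] lm_in_supp_and_max(1)[OF assms] by blast
qed

lemma supp_nonempty:
  assumes "qlin_pair q (v :: 'a poly \<times> 'a poly)" "v \<noteq> 0"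
  shows "supp q v \<noteq> {}"
proof (cases "fst v = 0")
  case False
  hence "(qdeg q (fst v), 1) \<in> supp q v"
    using coeff_qdeg_nonzero[of "fst v"] assms(1) by (auto simp: supp_def comp_of_def qlin_pair_def)
  thus ?thesis by auto
next
  case True
  hence "snd v \<noteq> 0" using assms(2) by (auto simp: prod_eq_iff)
  hence "(qdeg q (snd v), 2) \<in> supp q v"
    using coeff_qdeg_nonzero[of "snd v"] assms(1) by (auto simp: supp_def comp_of_def qlin_pair_def)
  thus ?thesis by auto
qed

lemma comp_of_add: "comp_of j (v + w) = comp_of j v + comp_of j w"
  by (simp add: comp_of_def)

lemma comp_of_lcomp: "comp_of j (lcomp a v) = pcompose a (comp_of j v)"
  by (simp add: comp_of_def lcomp_def)

lemma qlin_comp_of: "qlin_pair q (v :: 'a poly \<times> 'a poly) \<Longrightarrow> j \<in> {1, 2} \<Longrightarrow> qlin q (comp_of j v)"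
  by (auto simp: qlin_pair_def comp_of_def)

lemma lcomp_0: "lcomp 0 (v :: 'a poly \<times> 'a poly) = 0"
  by (simp add: lcomp_def zero_prod_def)

lemma lcomp_X: "lcomp (monom 1 1) (v :: 'a poly \<times> 'a poly) = v"
  by (simp add: lcomp_def monom_Suc monom_0 pcompose_pCons)

lemma coeff_pcompose_qlin_top:
  fixes a f :: "'a poly"
  assumes "qlin q a" "a \<noteq> 0" "qlin q f" "\<And>i. i > i0 \<Longrightarrow> coeff f (q ^ i) = 0"
  shows "coeff (pcompose a f) (q ^ (qdeg q a + i0)) = coeff a (q ^ qdeg q a) * coeff f (q ^ i0) ^ (q ^ qdeg q a)"
proof -
  let ?A = "qdeg q a"
  have "coeff a (q ^ s) * coeff f (q ^ (?A + i0 - s)) ^ (q ^ s) = 0" if "s \<le> ?A + i0" "s \<noteq> ?A" for s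
  proof (cases "s < ?A")
    case True
    thus ?thesis using assms(4)[of "?A + i0 - s"] q_ge_2 by (simp add: power_0_left)
  next
    case False
    thus ?thesis using le_qdeg[OF assms(1,2), of s] that(2) by fastforce
  qed
  hence "(\<Sum>s\<in>{..?A + i0} - {?A}. coeff a (q ^ s) * coeff f (q ^ (?A + i0 - s)) ^ (q ^ s)) = 0"
    by (intro sum.neutral) auto
  thus ?thesis unfolding coeff_pcompose_qlin[OF assms(1,3)] by (simp add: sum.remove[of _ ?A])
qed

lemma lm_lcomp:
  fixes a :: "'a poly" and v :: "'a poly \<times> 'a poly"
  assumes qa: "qlin q a" and a0: "a \<noteq> 0" and qv: "qlin_pair q v" and sv: "supp q v \<noteq> {}"
  shows "lm q k (lcomp a v) = (qdeg q a + fst (lm q k v), snd (lm q k v))"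
    and "supp q (lcomp a v) \<noteq> {}"
proof -
  obtain i0 j0 where l: "lm q k v = (i0, j0)" by (cases "lm q k v")
  let ?A = "qdeg q a"
  have j0: "j0 \<in> {1, 2}" and f0: "coeff (comp_of j0 v) (q ^ i0) \<noteq> 0"
    using lm_in_supp_and_max(1)[OF sv, of k] l by (auto simp: supp_def)
  have mx: "rank k (i, j) < rank k (i0, j0)" if "(i, j) \<in> supp q v" "(i, j) \<noteq> (i0, j0)" for i j
    using lm_in_supp_and_max(2)[OF sv that(1), where k=k] that(2) l by simp
  have "coeff (comp_of j0 v) (q ^ i) = 0" if "i > i0" for i
    using mx[of i j0] j0 that by (fastforce simp: supp_def rank_def wval_def)
  hence "coeff (pcompose a (comp_of j0 v)) (q ^ (?A + i0)) \<noteq> 0"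
    using coeff_pcompose_qlin_top[OF qa a0 qlin_comp_of[OF qv j0]] coeff_qdeg_nonzero[OF qa a0] f0
    by simp
  hence inS: "(?A + i0, j0) \<in> supp q (lcomp a v)" using j0 by (simp add: supp_def comp_of_lcomp)
  have "rank k m' < rank k (?A + i0, j0)" if "m' \<in> supp q (lcomp a v)" "m' \<noteq> (?A + i0, j0)" for m'
  proof -
    obtain u j where m': "m' = (u, j)" by (cases m')
    have j: "j \<in> {1, 2}" and "coeff (pcompose a (comp_of j v)) (q ^ u) \<noteq> 0"
      using that(1) m' by (auto simp: supp_def comp_of_lcomp)
    then obtain s where s: "s \<le> u" "coeff a (q ^ s) \<noteq> 0" "coeff (comp_of j v) (q ^ (u - s)) \<noteq> 0"
      using coeff_pcompose_qlin_nonzero[OF qa qlin_comp_of[OF qv j]] by blast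
    have "s \<le> ?A" by (rule le_qdeg[OF qa a0 s(2)])
    moreover have ins: "(u - s, j) \<in> supp q v" using s(3) j by (simp add: supp_def)
    moreover have "rank k (u - s, j) \<le> rank k (i0, j0)" using rank_le_lm[OF sv ins, of k] l by simp
    moreover have "s \<noteq> ?A \<or> (u - s, j) \<noteq> (i0, j0)" using that(2) m' s(1) by auto
    ultimately show ?thesis using mx[OF ins] s(1) m' by (auto simp: rank_def wval_def)
  qed
  thus "lm q k (lcomp a v) = (qdeg q a + fst (lm q k v), snd (lm q k v))"
    using lm_eqI[OF inS] l by simp
  show "supp q (lcomp a v) \<noteq> {}" using inS by auto
qed

lemma lm_add:
  fixes v w :: "'a poly \<times> 'a poly"
  assumes sv: "supp q v \<noteq> {}" and sw: "supp q w \<noteq> {}" and lt: "rank k (lm q k w) < rank k (lm q k v)"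
  shows "lm q k (v + w) = lm q k v"
proof (rule lm_eqI)
  obtain i j where l: "lm q k v = (i, j)" by (cases "lm q k v")
  have "lm q k v \<notin> supp q w" using rank_le_lm[OF sw] lt by (meson not_le)
  thus "lm q k v \<in> supp q (v + w)"
    using lm_in_supp_and_max(1)[OF sv, where k=k] l by (auto simp: supp_def comp_of_add)
  fix m' assume m': "m' \<in> supp q (v + w)" "m' \<noteq> lm q k v"
  hence "m' \<in> supp q v \<or> m' \<in> supp q w" by (cases m') (auto simp: supp_def comp_of_add)
  thus "rank k m' < rank k (lm q k v)"
    using lm_in_supp_and_max(2)[OF sv _ m'(2)] rank_le_lm[OF sw, of m' k] lt by (meson le_less_trans)
qed

end

section \<open>Rank distance\<close>

context fq_ext
begin

lemma dR_maximal_indep: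
  fixes a b :: "nat \<Rightarrow> 'a"
  obtains I where "I \<subseteq> {..<n}" "fq_indep q (\<lambda>i. a i - b i) I" "card I = dR q n a b"
    "\<And>j. j < n \<Longrightarrow> a j - b j \<in> span_Fq q I (\<lambda>i. a i - b i)"
proof -
  let ?e = "\<lambda>i. a i - b i"
  let ?T = "{card I | I. I \<subseteq> {..<n} \<and> fq_indep q ?e I}"
  have fin: "finite ?T"
    by (rule finite_subset[of _ "{..n}"]) (auto dest: card_mono[rotated])
  have "fq_indep q ?e {}" by (simp add: fq_indep_def)
  hence "card {} \<in> ?T" by (intro CollectI exI[of _ "{}"]) simp
  hence "dR q n a b \<in> ?T" and max: "\<And>I. I \<subseteq> {..<n} \<Longrightarrow> fq_indep q ?e I \<Longrightarrow> card I \<le> dR q n a b"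
    unfolding dR_def using Max_in[OF fin] Max_ge[OF fin] by blast+
  then obtain I where I: "I \<subseteq> {..<n}" "fq_indep q ?e I" "card I = dR q n a b" by auto
  have finI: "finite I" using I(1) finite_subset by blast
  have "?e j \<in> span_Fq q I ?e" if "j < n" for j
  proof (cases "j \<in> I")
    case True thus ?thesis using span_Fq_elem[OF finI True, of ?e] by simp
  next
    case False
    show ?thesis
    proof (rule ccontr)
      assume "?e j \<notin> span_Fq q I ?e"
      hence "fq_indep q ?e (insert j I)" by (rule fq_indep_insertI[OF finI False I(2)])
      hence "card (insert j I) \<le> card I" using max[of "insert j I"] I that by simp
      thus False using False finI by simp
    qed
  qed
  thus ?thesis using I that by blast
qed

lemma dR_le: "dR q n a b \<le> (n::nat)" for a b :: "nat \<Rightarrow> 'a"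
proof (rule dR_maximal_indep[of n a b])
  fix I assume "I \<subseteq> {..<n}" "card I = dR q n a b"
  thus ?thesis using card_mono[of "{..<n}" I] by simp
qed

end


section \<open>The interpolation module\<close>

locale interp_basis = fq_ext q m ty for q m :: nat and ty :: "'a::{field,finite} itself" +
  fixes n k :: nat and g r :: "nat \<Rightarrow> 'a" and b1 b2 :: "'a poly \<times> 'a poly"
  assumes g_indep: "fq_indep q g {..<n}"
    and basis: "is_basis q (interp_module q n g r) {b1, b2}"
    and lpos_b1: "lpos q k b1 = 1" and lpos_b2: "lpos q k b2 = 2"
begin

abbreviation "V \<equiv> span_Fq q {..<n} g"
abbreviation "PiV \<equiv> Pi_g q n g"
abbreviation "Lam \<equiv> Lambda q n g r"
abbreviation "M \<equiv> interp_module q n g r"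

lemma qlin_Pi: "qlin q PiV"
  and lead_coeff_Pi: "coeff PiV (q ^ n) = 1"
  and coeff_Pi_eq_0: "i > n \<Longrightarrow> coeff PiV (q ^ i) = 0"
  and poly_Pi_eq_0: "x \<in> V \<Longrightarrow> poly PiV x = 0"
  using qlin_subspace_poly[OF _ g_indep] lead_coeff_subspace_poly[OF _ g_indep]
    coeff_subspace_poly_eq_0[OF _ g_indep] poly_subspace_poly_eq_0
  by (simp_all add: Pi_g_eq_subspace_poly)

lemma poly_Lambda_lincomb:
  assumes "\<And>i. i < n \<Longrightarrow> c i \<in> Fq q"
  shows "poly Lam (\<Sum>i<n. c i * g i) = (\<Sum>i<n. c i * r i)"
  by (subst poly_qlin_lincomb[OF qlin_Lambda]) (use assms in \<open>auto simp: poly_Lambda_interpolates[OF g_indep]\<close>)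

lemma interp_module_elem:
  assumes "v \<in> M"
  obtains \<beta> \<gamma> where "qlin q \<beta>" "qlin q \<gamma>" "v = (pcompose \<beta> PiV - pcompose \<gamma> Lam, \<gamma>)"
proof -
  obtain \<beta> \<gamma> where "qlin q \<beta>" "qlin q \<gamma>" "v = lcomp \<beta> (PiV, 0) + lcomp \<gamma> (- Lam, monom 1 1)"
    using assms by (auto simp: interp_module_def)
  thus ?thesis using that
    by (simp add: lcomp_def pcompose_0_qlin pcompose_X[simplified] pcompose_qlin_uminus)
qed

lemma qlin_pair_interp_module: "v \<in> M \<Longrightarrow> qlin_pair q v"
  by (elim interp_module_elem) (simp add: qlin_pair_def qlin_diff qlin_pcompose qlin_Pi qlin_Lambda)

lemma b_in_M: "b1 \<in> M" "b2 \<in> M"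
  using basis by (auto simp: is_basis_def)

lemma b1_ne_b2: "b1 \<noteq> b2"
  using lpos_b1 lpos_b2 by auto

lemma interp_module_lcomb:
  assumes "v \<in> M"
  obtains a1 a2 where "qlin q a1" "qlin q a2" "v = lcomp a1 b1 + lcomp a2 b2"
  using basis assms b1_ne_b2 unfolding is_basis_def by auto

lemma b_nonzero: "b1 \<noteq> 0" "b2 \<noteq> 0"
proof -
  have indep: "a1 = 0 \<and> a2 = 0" if "qlin q a1" "qlin q a2" "lcomp a1 b1 + lcomp a2 b2 = 0" for a1 a2
    using basis that b1_ne_b2 unfolding is_basis_def
    by (auto dest!: spec[of _ "\<lambda>f. if f = b1 then a1 else a2"])
  show "b1 \<noteq> 0" using indep[OF qlin_X qlin_0] by (auto simp: lcomp_X[simplified] lcomp_0)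
  show "b2 \<noteq> 0" using indep[OF qlin_0 qlin_X] by (auto simp: lcomp_X[simplified] lcomp_0)
qed

lemma supp_b_nonempty: "supp q b1 \<noteq> {}" "supp q b2 \<noteq> {}"
  using supp_nonempty qlin_pair_interp_module b_in_M b_nonzero by auto

lemma lm_b1: "lm q k b1 = (qdeg q (fst b1), 1)"
  and coeff_snd_b1: "coeff (snd b1) (q ^ u) \<noteq> 0 \<Longrightarrow> u + (k - 1) < qdeg q (fst b1)"
proof -
  obtain l where l: "lm q k b1 = (l, 1)" using lpos_b1 by (cases "lm q k b1") (simp add: lpos_def)
  have lt: "rank k mo < 2 * l + 1" if "mo \<in> supp q b1" "mo \<noteq> (l, 1)" for mo
    using lm_in_supp_and_max(2)[OF supp_b_nonempty(1) that(1), where k=k] that(2) l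
    by (simp add: rank_def wval_def)
  have "qdeg q (fst b1) = l"
  proof (rule qdeg_eqI)
    show "qlin q (fst b1)" using qlin_pair_interp_module[OF b_in_M(1)] by (simp add: qlin_pair_def)
    show "coeff (fst b1) (q ^ l) \<noteq> 0"
      using lm_in_supp_and_max(1)[OF supp_b_nonempty(1), of k] l by (simp add: supp_def comp_of_def)
    show "coeff (fst b1) (q ^ i) = 0" if "i > l" for i
      using lt[of "(i, 1)"] that by (fastforce simp: supp_def comp_of_def rank_def wval_def)
  qed
  thus "lm q k b1 = (qdeg q (fst b1), 1)" using l by simp
  show "coeff (snd b1) (q ^ u) \<noteq> 0 \<Longrightarrow> u + (k - 1) < qdeg q (fst b1)"
    using lt[of "(u, 2)"] \<open>qdeg q (fst b1) = l\<close> by (simp add: supp_def comp_of_def rank_def wval_def)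
qed

lemma lm_b2: "lm q k b2 = (qdeg q (snd b2), 2)"
proof -
  obtain l where l: "lm q k b2 = (l, 2)" using lpos_b2 by (cases "lm q k b2") (simp add: lpos_def)
  have "qdeg q (snd b2) = l"
  proof (rule qdeg_eqI)
    show "qlin q (snd b2)" using qlin_pair_interp_module[OF b_in_M(2)] by (simp add: qlin_pair_def)
    show "coeff (snd b2) (q ^ l) \<noteq> 0"
      using lm_in_supp_and_max(1)[OF supp_b_nonempty(2), of k] l by (simp add: supp_def comp_of_def)
    show "coeff (snd b2) (q ^ i) = 0" if "i > l" for i
      using lm_in_supp_and_max(2)[OF supp_b_nonempty(2), of "(i, 2)" k] that l
      by (fastforce simp: supp_def comp_of_def rank_def wval_def)
  qed
  thus ?thesis using l by simp
qed

lemma wdeg_b1: "wdeg q k b1 = qdeg q (fst b1)"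
  and wdeg_b2: "wdeg q k b2 = qdeg q (snd b2) + (k - 1)"
  using wdeg_eq_wval_lm[OF supp_b_nonempty(1)] wdeg_eq_wval_lm[OF supp_b_nonempty(2)] lm_b1 lm_b2
  by (auto simp: wval_def)

text \<open>The leading monomials of \<open>a\<^sub>1 \<circ> b\<^sub>1\<close> and \<open>a\<^sub>2 \<circ> b\<^sub>2\<close> lie in different positions, so they
  cannot cancel: the leading monomial of a module element in position 2 comes from \<open>a\<^sub>2 \<circ> b\<^sub>2\<close>.\<close>
lemma qdeg_snd_b2_le_lm:
  assumes "w \<in> M" "supp q w \<noteq> {}" "lm q k w = (d, 2)"
  shows "qdeg q (snd b2) \<le> d"
proof -
  obtain a1 a2 where a: "qlin q a1" "qlin q a2" "w = lcomp a1 b1 + lcomp a2 b2"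
    using interp_module_lcomb[OF assms(1)] .
  have qb: "qlin_pair q b1" "qlin_pair q b2" using qlin_pair_interp_module b_in_M by auto
  have lm1: "lm q k (lcomp a1 b1) = (qdeg q a1 + qdeg q (fst b1), 1)"
    and s1: "supp q (lcomp a1 b1) \<noteq> {}" if "a1 \<noteq> 0"
    using lm_lcomp[OF a(1) that qb(1) supp_b_nonempty(1)] lm_b1 by simp_all
  have lm2: "lm q k (lcomp a2 b2) = (qdeg q a2 + qdeg q (snd b2), 2)"
    and s2: "supp q (lcomp a2 b2) \<noteq> {}" if "a2 \<noteq> 0"
    using lm_lcomp[OF a(2) that qb(2) supp_b_nonempty(2)] lm_b2 by simp_all
  have a2: "a2 \<noteq> 0"
  proof
    assume "a2 = 0"
    hence "a1 \<noteq> 0" "w = lcomp a1 b1" using a(3) assms(2) by (auto simp: lcomp_0 supp_def comp_of_def)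
    thus False using lm1 assms(3) by simp
  qed
  have "lm q k w = lm q k (lcomp a2 b2)"
  proof (cases "a1 = 0")
    case True thus ?thesis using a(3) by (simp add: lcomp_0)
  next
    case a1: False
    let ?r1 = "rank k (lm q k (lcomp a1 b1))" and ?r2 = "rank k (lm q k (lcomp a2 b2))"
    have "?r1 \<noteq> ?r2"
      using lm1[OF a1] lm2[OF a2] by (simp add: rank_def wval_def) presburger
    moreover have "\<not> ?r2 < ?r1"
    proof
      assume "?r2 < ?r1"
      hence "lm q k w = lm q k (lcomp a1 b1)" using lm_add[OF s1[OF a1] s2[OF a2]] a(3) by simp
      thus False using lm1[OF a1] assms(3) by simp
    qed
    ultimately have "?r1 < ?r2" by simp
    thus ?thesis using lm_add[OF s2[OF a2] s1[OF a1]] a(3) by (simp add: add.commute)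
  qed
  thus ?thesis using lm2[OF a2] assms(3) by simp
qed

end

section \<open>Bounds on the minimal basis\<close>

context interp_basis
begin

lemma closest_codeword:
  obtains f y I where "qlin q f" "f = 0 \<or> qdeg q f < k" "finite I" "fq_indep q (\<lambda>i. y i - r i) I"
    "card I = Min {dR q n c r | c. c \<in> gabidulin q n k g}"
    "\<And>x. x \<in> V \<Longrightarrow> poly f x - poly Lam x \<in> span_Fq q I (\<lambda>i. y i - r i)"
proof -
  let ?S = "{dR q n c r | c. c \<in> gabidulin q n k g}"
  have "finite ?S"
    by (rule finite_subset[of _ "{..n}"]) (auto simp: dR_le)
  moreover have "(\<lambda>_. 0) \<in> gabidulin q n k g"
    unfolding gabidulin_def by (intro CollectI exI[of _ 0]) simp
  ultimately obtain c where c: "c \<in> gabidulin q n k g" "dR q n c r = Min ?S"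
    using Min_in[of ?S] by force
  then obtain f where f: "qlin q f" "f = 0 \<or> qdeg q f < k" "\<And>i. i < n \<Longrightarrow> c i = poly f (g i)"
    by (auto simp: gabidulin_def)
  obtain I where I: "I \<subseteq> {..<n}" "fq_indep q (\<lambda>i. c i - r i) I" "card I = dR q n c r"
    "\<And>j. j < n \<Longrightarrow> c j - r j \<in> span_Fq q I (\<lambda>i. c i - r i)"
    using dR_maximal_indep[of n c r] by blast
  have span: "poly f x - poly Lam x \<in> span_Fq q I (\<lambda>i. c i - r i)" if x: "x \<in> V" for x
  proof -
    obtain a where a: "\<And>i. i < n \<Longrightarrow> a i \<in> Fq q" "x = (\<Sum>i<n. a i * g i)"
      using x by (auto simp: span_Fq_def)
    have "poly f x = (\<Sum>i<n. a i * c i)"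
      unfolding a(2) by (subst poly_qlin_lincomb[OF f(1)]) (use a(1) f(3) in auto)
    moreover have "poly Lam x = (\<Sum>i<n. a i * r i)"
      unfolding a(2) using a(1) by (rule poly_Lambda_lincomb)
    ultimately have "poly f x - poly Lam x = (\<Sum>i<n. a i * (c i - r i))"
      by (simp add: right_diff_distrib sum_subtractf)
    also have "\<dots> \<in> span_Fq q I (\<lambda>i. c i - r i)"
      using a(1) I(4) by (intro span_Fq_lincomb) auto
    finally show ?thesis .
  qed
  have "finite I" using I(1) finite_subset by blast
  thus ?thesis by (rule that[OF f(1,2) _ I(2)]) (simp_all add: I(3) c(2) span)
qed

context
  fixes f :: "'a poly" and e :: "nat \<Rightarrow> 'a" and I :: "nat set" and t :: nat
  assumes qlin_f: "qlin q f" and qdeg_f: "f = 0 \<or> qdeg q f < k"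
    and fin_I: "finite I" and indep_I: "fq_indep q e I" and card_I: "card I = t"
    and error_span: "\<And>x. x \<in> V \<Longrightarrow> poly f x - poly Lam x \<in> span_Fq q I e"
begin

lemma coeff_pcompose_f_nonzero_le:
  assumes "qlin q a" "coeff (pcompose a f) (q ^ u) \<noteq> 0"
  shows "u \<le> qdeg q a + (k - 1)"
proof -
  have "f \<noteq> 0" using assms pcompose_0_qlin by auto
  thus ?thesis using coeff_pcompose_qlin_nonzero_le[OF assms(1) qlin_f assms(2)] qdeg_f by linarith
qed

text \<open>The subspace polynomial \<open>E\<close> of the error span annihilates \<open>f - \<Lambda>\<close> on \<open>V\<close>, so
  \<open>E \<circ> (\<Lambda> - f)\<close> is a left multiple \<open>\<beta> \<circ> \<Pi>\<close> and \<open>\<beta> \<circ> [\<Pi>  0] + E \<circ> [-\<Lambda>  x] = [-E \<circ> f  E]\<close>.\<close>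
lemma error_pair_in_interp_module: "(- pcompose (subspace_poly q I e) f, subspace_poly q I e) \<in> M"
proof -
  define E where "E = subspace_poly q I e"
  have qE: "qlin q E" using qlin_subspace_poly[OF fin_I indep_I] by (simp add: E_def)
  have "qlin q (pcompose E (Lam - f))" by (intro qlin_pcompose qlin_diff qE qlin_Lambda qlin_f)
  then obtain \<beta> R where \<beta>R: "qlin q \<beta>" "qlin q R" "\<And>i. i \<ge> n \<Longrightarrow> coeff R (q ^ i) = 0"
      "pcompose E (Lam - f) = pcompose \<beta> PiV + R"
    using qlin_right_division[OF qlin_Pi lead_coeff_Pi coeff_Pi_eq_0] by blast
  have "poly R x = 0" if "x \<in> V" for x
  proof -
    have "poly E (poly Lam x - poly f x) = - poly E (poly f x - poly Lam x)"
      using poly_qlin_uminus[OF qE, of "poly f x - poly Lam x"] by simp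
    also have "\<dots> = 0" using poly_subspace_poly_eq_0[OF error_span[OF that]] by (simp add: E_def)
    finally show ?thesis
      using arg_cong[OF \<beta>R(4), of "\<lambda>p. poly p x"] poly_Pi_eq_0[OF that] poly_0_qlin[OF \<beta>R(1)]
      by (simp add: poly_pcompose)
  qed
  hence "R = 0"
    using \<beta>R(2,3) by (intro qlin_vanishing_on_span_eq_0[OF _ g_indep]) auto
  hence "pcompose \<beta> PiV = pcompose E Lam - pcompose E f"
    using \<beta>R(4) by (simp add: pcompose_qlin_diff[OF qE])
  hence "lcomp \<beta> (PiV, 0) + lcomp E (- Lam, monom 1 1) = (- pcompose E f, E)"
    by (simp add: lcomp_def pcompose_0_qlin[OF \<beta>R(1)] pcompose_X[simplified] pcompose_qlin_uminus[OF qE])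
  moreover have "lcomp \<beta> (PiV, 0) + lcomp E (- Lam, monom 1 1) \<in> M"
    unfolding interp_module_def using \<beta>R(1) qE by blast
  ultimately show ?thesis by (simp add: E_def)
qed

lemma qdeg_snd_b2_le: "qdeg q (snd b2) \<le> t"
proof -
  define E where "E = subspace_poly q I e"
  define w where "w = (- pcompose E f, E)"
  have qE: "qlin q E" and lcE: "coeff E (q ^ t) = 1" and qdE: "qdeg q E = t"
    using qlin_subspace_poly[OF fin_I indep_I] lead_coeff_subspace_poly[OF fin_I indep_I]
      qdeg_subspace_poly[OF fin_I indep_I] card_I by (simp_all add: E_def)
  have t2: "(t, 2) \<in> supp q w" using lcE by (simp add: w_def supp_def comp_of_def)
  have "lm q k w = (t, 2)"
  proof (rule lm_eqI[OF t2])
    fix m' assume m': "m' \<in> supp q w" "m' \<noteq> (t, 2)"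
    obtain u j where u: "m' = (u, j)" by (cases m')
    moreover have "u \<le> t + (k - 1)" if "j = 1"
      using m' that coeff_pcompose_f_nonzero_le[OF qE, of u] qdE
      by (fastforce simp: w_def supp_def comp_of_def u)
    moreover have "u < t" if "j = 2"
      using m' that le_qdeg[OF qE, of u] qdE by (fastforce simp: w_def supp_def comp_of_def u)
    ultimately show "rank k m' < rank k (t, 2)"
      using m'(1) supp_snd by (fastforce simp: rank_def wval_def)
  qed
  moreover have "w \<in> M" using error_pair_in_interp_module by (simp add: w_def E_def)
  ultimately show ?thesis using qdeg_snd_b2_le_lm t2 by blast
qed

text \<open>The weight condition on \<open>b\<^sub>1\<close> makes \<open>b\<^sub>1\<^sub>,\<^sub>2 \<circ> f\<close> smaller than \<open>b\<^sub>1\<^sub>,\<^sub>1\<close>.\<close>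
lemma qdeg_fst_b1_add:
  defines "h \<equiv> fst b1 + pcompose (snd b1) f"
  shows "qdeg q h = qdeg q (fst b1)" and "h \<noteq> 0"
proof -
  let ?l = "qdeg q (fst b1)"
  have qb1: "qlin q (fst b1)" "qlin q (snd b1)"
    using qlin_pair_interp_module[OF b_in_M(1)] by (simp_all add: qlin_pair_def)
  have small: "coeff (pcompose (snd b1) f) (q ^ u) = 0" if "u \<ge> ?l" for u
  proof (rule ccontr)
    assume nz: "coeff (pcompose (snd b1) f) (q ^ u) \<noteq> 0"
    hence "snd b1 \<noteq> 0" by auto
    hence "qdeg q (snd b1) + (k - 1) < ?l"
      using coeff_snd_b1 coeff_qdeg_nonzero[OF qb1(2)] by simp
    thus False using coeff_pcompose_f_nonzero_le[OF qb1(2) nz] that by linarith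
  qed
  have nz_fst: "fst b1 \<noteq> 0"
    using lm_in_supp_and_max(1)[OF supp_b_nonempty(1), of k] lm_b1 by (auto simp: supp_def comp_of_def)
  have top: "coeff h (q ^ ?l) \<noteq> 0"
    using coeff_qdeg_nonzero[OF qb1(1) nz_fst] small[of ?l] by (simp add: h_def)
  thus "h \<noteq> 0" by auto
  have "coeff h (q ^ i) = 0" if "i > ?l" for i
    using le_qdeg[OF qb1(1) nz_fst, of i] small[of i] that by (auto simp: h_def)
  thus "qdeg q h = ?l"
    using top h_def qb1 qlin_f by (intro qdeg_eqI) (auto intro: qlin_add qlin_pcompose)
qed

text \<open>On \<open>V\<close> the polynomial \<open>b\<^sub>1\<^sub>,\<^sub>1 + b\<^sub>1\<^sub>,\<^sub>2 \<circ> f\<close> agrees with \<open>b\<^sub>1\<^sub>,\<^sub>2 \<circ> (f - \<Lambda>)\<close>, so it takes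
  at most \<open>q\<^sup>t\<close> values there.\<close>
lemma qdeg_fst_b1_ge: "n \<le> t + qdeg q (fst b1)"
proof -
  obtain \<beta> \<gamma> where \<beta>\<gamma>: "qlin q \<beta>" "qlin q \<gamma>" "b1 = (pcompose \<beta> PiV - pcompose \<gamma> Lam, \<gamma>)"
    using interp_module_elem[OF b_in_M(1)] .
  define h where "h = fst b1 + pcompose (snd b1) f"
  have qh: "qlin q h"
    unfolding h_def using \<beta>\<gamma> qlin_pair_interp_module[OF b_in_M(1)] qlin_f
    by (auto simp: qlin_pair_def intro: qlin_add qlin_pcompose)
  have "poly h ` V \<subseteq> poly \<gamma> ` span_Fq q I e"
  proof
    fix y assume "y \<in> poly h ` V"
    then obtain x where x: "x \<in> V" "y = poly h x" by auto
    have "y = poly \<gamma> (poly f x - poly Lam x)"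
      using x \<beta>\<gamma>(3) poly_Pi_eq_0[OF x(1)] poly_0_qlin[OF \<beta>\<gamma>(1)] poly_qlin_diff[OF \<beta>\<gamma>(2)]
      by (simp add: h_def poly_pcompose)
    thus "y \<in> poly \<gamma> ` span_Fq q I e" using error_span[OF x(1)] by blast
  qed
  hence "card (poly h ` V) \<le> card (poly \<gamma> ` span_Fq q I e)" by (intro card_mono) simp_all
  also have "\<dots> \<le> card (span_Fq q I e)" by (rule card_image_le) simp
  also have "\<dots> \<le> q ^ t" using card_span_Fq_le[OF fin_I, of e] card_I by simp
  finally have card_image: "card (poly h ` V) \<le> q ^ t" .
  have "q ^ n \<le> card (poly h ` V) * q ^ qdeg q (fst b1)"
    using card_span_le_card_image_mult[OF _ g_indep qh qdeg_fst_b1_add(2)[folded h_def]]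
      qdeg_fst_b1_add(1)[folded h_def] by simp
  also have "\<dots> \<le> q ^ t * q ^ qdeg q (fst b1)" using card_image by (rule mult_le_mono1)
  finally have "q ^ n \<le> q ^ (t + qdeg q (fst b1))" by (simp add: power_add)
  thus ?thesis by simp
qed
end

end

theorem lemma32:
  fixes q m n k :: nat and g r :: "nat \<Rightarrow> 'a::{field,finite}"
    and b1 b2 :: "'a poly \<times> 'a poly"
  assumes "prime_power q" and "m \<ge> 1" and "card (UNIV :: 'a set) = q ^ m"
    and "1 \<le> k" and "k \<le> n"
    and "fq_indep q g {..<n}"
    and "minimal_basis q k (interp_module q n g r) {b1, b2}"
    and "lpos q k b1 = 1" and "lpos q k b2 = 2"
  defines "t \<equiv> Min {dR q n c r | c. c \<in> gabidulin q n k g}"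
  shows "wdeg q k b2 \<le> t + k - 1 \<and> qdeg q (snd b2) \<le> t \<and>
         wdeg q k b1 = qdeg q (fst b1) \<and> int (wdeg q k b1) \<ge> int n - int t"
proof -
  interpret fq_ext q m "TYPE('a)"
    using assms(1-3) by (rule fq_ext_of_prime_power)
  interpret interp_basis q m "TYPE('a)" n k g r b1 b2
    using assms(6-9) by unfold_locales (simp_all add: minimal_basis_def)
  obtain f I y where cw: "qlin q f" "f = 0 \<or> qdeg q f < k" "finite I" "fq_indep q (\<lambda>i. y i - r i) I"
    "card I = Min {dR q n c r | c. c \<in> gabidulin q n k g}"
    "\<And>x. x \<in> V \<Longrightarrow> poly f x - poly Lam x \<in> span_Fq q I (\<lambda>i. y i - r i)"
    by (rule closest_codeword) blast
  have "card I = t" using cw(5) by (simp add: t_def)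
  note bounds = qdeg_snd_b2_le[OF cw(1-4) this cw(6)] qdeg_fst_b1_ge[OF cw(1-4) this cw(6)]
  show ?thesis using bounds wdeg_b1 wdeg_b2 assms(4) by auto
qed

end
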